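(* Assume $n > 3t+2d$. Then Algorithm 1 implements the MBRB abstraction, i.e. it satisfies MBRB-Validity, MBRB-No-duplication, MBRB-No-duplicity, MBRB-Local-delivery and MBRB-Global-delivery, with $\ell = c-d$. Moreover, if a correct process mbrb-broadcasts an app-message $m$ with sequence number $sn$, then at least $c-d$ correct processes mbrb-deliver $(m,sn)$ from it within 2 communication steps if $d < \frac{c-\lfloor (n+t)/2\rfloor}{\lfloor (n+t)/2\rfloor+1}$, and within 3 communication steps if $d < c-\sqrt{c\cdot\frac{n+t}{2}}$. Finally, the mbrb-broadcast of an app-message by a correct process entails the sending of at most $2n^2$ implementation messages by correct processes.
   Context: System model. There are $n$ asynchronous sequential processes $p_1,\dots,p_n$ with distinct identities $1,\dots,n$ known to all. Up to $t$ processes are Byzantine (they may behave arbitrarily and collude; a crash counts as a Byzantine failure); the others are correct. In a given execution, $c$ denotes the number of correct processes, so $n-t\le c\le n$. Processes communicate over a fully connected asynchronous point-to-point network that never corrupts, duplicates or creates messages. The operation "broadcast $M$" by a process means sending the implementation message (imp-message) $M$ to each of the $n$ processes (including itself); correct processes send only via this operation. A message adversary with parameter $d$, $0\le d<c$, may, for each broadcast by a correct process, suppress up to $d$ of the copies addressed to correct processes; all other copies sent between correct processes are eventually received. Digital signatures are unforgeable: each process has a key pair, all public keys and their owners are known, and only $p_k$ can produce a valid signature by $p_k$; a process produces at most one signature per signed item. MBRB abstraction. An application message (app-message) $m$ is mbrb-broadcast by $p_i$ with a sequence number $sn$ (invocation $\mathrm{mbrb\_broadcast}(m,sn)$); a correct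 process never uses the same sequence number twice. A process mbrb-delivers a triplet $(m,sn,j)$ meaning app-message $m$ from $p_j$ with sequence number $sn$. Properties: MBRB-Validity: if a correct process mbrb-delivers $m$ from a correct $p_j$ with sequence number $sn$, then $p_j$ mbrb-broadcast $m$ with sequence number $sn$. MBRB-No-duplication: a correct process mbrb-delivers at most one app-message from $p_j$ with sequence number $sn$. MBRB-No-duplicity: no two correct processes mbrb-deliver different app-messages from the same $p_i$ with the same $sn$. MBRB-Local-delivery: if a correct $p_i$ mbrb-broadcasts $m$ with $sn$, at least one correct process eventually mbrb-delivers $m$ from $p_i$ with $sn$. MBRB-Global-delivery (with parameter $\ell$): if a correct process mbrb-delivers $m$ from $p_j$ with $sn$, then at least $\ell$ correct processes mbrb-deliver $m$ from $p_j$ with $sn$. Algorithm 1 (code for $p_i$). Each process stores, for each triplet $(m,sn,j)$, a set of saved valid signatures of that triplet, at most one per signer. On $\mathrm{mbrb\_broadcast}(m,sn)$: $p_i$ saves its own signature of $(m,sn,i)$ and broadcasts $\mathrm{BUNDLE}(m,sn,i,S)$ where $S$ is the set of all saved signatures for $(m,sn,i)$. On receiving $\mathrm{BUNDLE}(m,sn,j,sigs)$: if $p_i$ has not already mbrb-delivered some triplet $(-,sn,j)$ and $sigs$ contains a valid signature of $(m,sn,j)$ by $p_j$, then: (1) $p_i$ saves all not-yet-saved valid signatures of $(m,sn,j)$ contained in $sigs$; (2) if $p_i$ has not yet signed any triplet $(-,sn,j)$, it saves its own signature of $(m,sn,j)$ and broadcasts $\mathrm{BUNDLE}(m,sn,j,\text{all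 saved signatures for }(m,sn,j))$; (3) if strictly more than $\frac{n+t}{2}$ signatures for $(m,sn,j)$ are saved, it broadcasts $\mathrm{BUNDLE}(m,sn,j,\text{all saved signatures for }(m,sn,j))$ and then mbrb-delivers $(m,sn,j)$. Time is measured in communication steps: local computation takes zero time and all imp-messages have the same transfer delay (one step). *)

theory Defs
  imports Complex_Main "HOL-Library.Multiset"
begin

text \<open>Processes are identified by the naturals 1..n.  A triplet (m, sn, j) is an
app-message m from p_j with sequence number sn.  A signature is modelled abstractly
as a pair (k, T): "the signature of item T by p_k".  Unforgeability is modelled by
restricting which such pairs Byzantine processes may put into messages.\<close>

type_synonym 'm trip = "'m \<times> nat \<times> nat"
type_synonym 'm sig = "nat \<times> 'm trip"

datatype 'm msg = Bundle 'm nat nat "'m sig set"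

fun msg_sigs :: "'m msg \<Rightarrow> 'm sig set" where
  "msg_sigs (Bundle m sn j sigs) = sigs"

fun msg_key :: "'m msg \<Rightarrow> nat \<times> nat" where
  "msg_key (Bundle m sn j sigs) = (sn, j)"

record 'm lstate =
  saved   :: "'m trip \<Rightarrow> nat set"    \<comment> \<open>signers of the saved valid signatures of each triplet\<close>
  signed  :: "'m trip set"
  dlog    :: "'m trip list"             \<comment> \<open>mbrb-deliveries, in order\<close>
  invoked :: "('m \<times> nat) set"          \<comment> \<open>mbrb-broadcast invocations (m, sn)\<close>
  bclog   :: "'m msg list"              \<comment> \<open>imp-messages broadcast, in order\<close>

definition init_lstate :: "'m lstate" where
  "init_lstate = \<lparr>saved = (\<lambda>_. {}), signed = {}, dlog = [], invoked = {}, bclog = []\<rparr>"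

definition valid_signers :: "nat \<Rightarrow> 'm trip \<Rightarrow> 'm sig set \<Rightarrow> nat set" where
  "valid_signers n T sigs = {k. (k, T) \<in> sigs \<and> k \<in> {1..n}}"

definition sig_set :: "'m trip \<Rightarrow> nat set \<Rightarrow> 'm sig set" where
  "sig_set T K = (\<lambda>k. (k, T)) ` K"

definition add_sigs :: "'m trip \<Rightarrow> nat set \<Rightarrow> 'm lstate \<Rightarrow> 'm lstate" where
  "add_sigs T K s = s\<lparr>saved := (saved s)(T := saved s T \<union> K)\<rparr>"

definition sign :: "nat \<Rightarrow> 'm trip \<Rightarrow> 'm lstate \<Rightarrow> 'm lstate" where
  "sign i T s = (add_sigs T {i} s)\<lparr>signed := insert T (signed s)\<rparr>"

definition signed_some :: "nat \<Rightarrow> nat \<Rightarrow> 'm lstate \<Rightarrow> bool" where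
  "signed_some sn j s \<longleftrightarrow> (\<exists>m. (m, sn, j) \<in> signed s)"

definition delivered_some :: "nat \<Rightarrow> nat \<Rightarrow> 'm lstate \<Rightarrow> bool" where
  "delivered_some sn j s \<longleftrightarrow> (\<exists>m. (m, sn, j) \<in> set (dlog s))"

text \<open>Handler of mbrb_broadcast(m, sn) at p_i: returns new state and broadcasts.\<close>
definition on_invoke :: "nat \<Rightarrow> 'm \<Rightarrow> nat \<Rightarrow> 'm lstate \<Rightarrow> 'm lstate \<times> 'm msg list" where
  "on_invoke i m sn s =
    (let T = (m, sn, i);
         s1 = (sign i T s)\<lparr>invoked := insert (m, sn) (invoked s)\<rparr>;
         M = Bundle m sn i (sig_set T (saved s1 T))
     in (s1\<lparr>bclog := bclog s1 @ [M]\<rparr>, [M]))"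

text \<open>Handler of the reception of BUNDLE(m, sn, j, sigs) at p_i (threshold uses n and t).\<close>
definition on_bundle :: "nat \<Rightarrow> nat \<Rightarrow> nat \<Rightarrow> 'm \<Rightarrow> nat \<Rightarrow> nat \<Rightarrow> 'm sig set \<Rightarrow> 'm lstate
                          \<Rightarrow> 'm lstate \<times> 'm msg list" where
  "on_bundle n t i m sn j sigs s =
    (let T = (m, sn, j) in
     if delivered_some sn j s \<or> j \<notin> valid_signers n T sigs then (s, [])
     else
       let s1 = add_sigs T (valid_signers n T sigs) s;
           s2 = (if signed_some sn j s1 then s1 else sign i T s1);
           out2 = (if signed_some sn j s1 then [] else [Bundle m sn j (sig_set T (saved s2 T))]);
           dlv = (n + t < 2 * card (saved s2 T));
           out3 = (if dlv then [Bundle m sn j (sig_set T (saved s2 T))] else []);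
           s3 = (if dlv then s2\<lparr>dlog := dlog s2 @ [T]\<rparr> else s2)
       in (s3\<lparr>bclog := bclog s3 @ out2 @ out3\<rparr>, out2 @ out3))"

text \<open>A message copy in transit: (sender, destination, imp-message, sending time).\<close>
type_synonym 'm copy = "nat \<times> nat \<times> 'm msg \<times> nat"

fun cp_dst :: "'m copy \<Rightarrow> nat" where "cp_dst (s, q, M, \<tau>) = q"
fun cp_msg :: "'m copy \<Rightarrow> 'm msg" where "cp_msg (s, q, M, \<tau>) = M"
fun cp_time :: "'m copy \<Rightarrow> nat" where "cp_time (s, q, M, \<tau>) = \<tau>"

record 'm config =
  loc   :: "nat \<Rightarrow> 'm lstate"        \<comment> \<open>local states (meaningful for correct processes)\<close>
  net   :: "'m copy multiset"         \<comment> \<open>copies sent and not yet received\<close>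
  bknow :: "'m sig set"               \<comment> \<open>signatures received so far by Byzantine processes\<close>
  clock :: nat                        \<comment> \<open>current time, in communication steps\<close>

definition init_config :: "'m config" where
  "init_config = \<lparr>loc = (\<lambda>_. init_lstate), net = {#}, bknow = {}, clock = 0\<rparr>"

text \<open>Copies of a broadcast of M by p_i at time tau, the copies to the processes in D
being suppressed by the message adversary.\<close>
definition bcast_copies :: "nat \<Rightarrow> nat \<Rightarrow> nat \<Rightarrow> 'm msg \<Rightarrow> nat set \<Rightarrow> 'm copy multiset" where
  "bcast_copies n i \<tau> M D = image_mset (\<lambda>q. (i, q, M, \<tau>)) (mset_set ({1..n} - D))"

definition all_copies :: "nat \<Rightarrow> nat \<Rightarrow> nat \<Rightarrow> 'm msg list \<Rightarrow> nat set list \<Rightarrow> 'm copy multiset" where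
  "all_copies n i \<tau> Ms Ds = sum_list (map (\<lambda>(M, D). bcast_copies n i \<tau> M D) (zip Ms Ds))"

text \<open>Message-adversary choices: one suppression set per broadcast, each containing at most
d correct processes.\<close>
definition adv_ok :: "nat \<Rightarrow> nat set \<Rightarrow> 'm msg list \<Rightarrow> nat set list \<Rightarrow> bool" where
  "adv_ok d C Ms Ds \<longleftrightarrow> length Ds = length Ms \<and> (\<forall>D \<in> set Ds. D \<subseteq> C \<and> card D \<le> d)"

datatype 'm action =
    Invoke nat 'm nat "nat set list"
  | Recv "'m copy" "nat set list"
  | ByzSend nat nat "'m msg"
  | ByzRecv "'m copy"
  | Tick

text \<open>One atomic step.  If sync holds, every imp-message has transfer delay exactly one
step (used for the latency claims); otherwise the network is asynchronous.\<close>
definition step :: "bool \<Rightarrow> nat \<Rightarrow> nat \<Rightarrow> nat \<Rightarrow> nat set \<Rightarrow> 'm action \<Rightarrow> 'm config \<Rightarrow> 'm config \<Rightarrow> bool" where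
  "step sync n t d C a cf cf' =
    (case a of
       Invoke i m sn Ds \<Rightarrow>
         i \<in> C \<and> (\<forall>m'. (m', sn) \<notin> invoked (loc cf i)) \<and>
         (let (s', outs) = on_invoke i m sn (loc cf i) in
            adv_ok d C outs Ds \<and>
            cf' = cf\<lparr>loc := (loc cf)(i := s'), net := net cf + all_copies n i (clock cf) outs Ds\<rparr>)
     | Recv cp Ds \<Rightarrow>
         cp \<in># net cf \<and> cp_dst cp \<in> C \<and> (sync \<longrightarrow> cp_time cp < clock cf) \<and>
         (case cp_msg cp of Bundle m sn j sigs \<Rightarrow>
            (let q = cp_dst cp; (s', outs) = on_bundle n t q m sn j sigs (loc cf q) in
               adv_ok d C outs Ds \<and>
               cf' = cf\<lparr>loc := (loc cf)(q := s'),
                        net := (net cf - {#cp#}) + all_copies n q (clock cf) outs Ds\<rparr>))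
     | ByzSend b q M \<Rightarrow>
         b \<in> {1..n} - C \<and> q \<in> {1..n} \<and>
         (\<forall>(k, T) \<in> msg_sigs M. k \<in> C \<longrightarrow> (k, T) \<in> bknow cf) \<and>
         cf' = cf\<lparr>net := net cf + {#(b, q, M, clock cf)#}\<rparr>
     | ByzRecv cp \<Rightarrow>
         cp \<in># net cf \<and> cp_dst cp \<notin> C \<and> (sync \<longrightarrow> cp_time cp < clock cf) \<and>
         cf' = cf\<lparr>net := net cf - {#cp#}, bknow := bknow cf \<union> msg_sigs (cp_msg cp)\<rparr>
     | Tick \<Rightarrow>
         (sync \<longrightarrow> (\<forall>cp \<in># net cf. clock cf \<le> cp_time cp)) \<and>
         cf' = cf\<lparr>clock := Suc (clock cf)\<rparr>)"

definition execution :: "bool \<Rightarrow> nat \<Rightarrow> nat \<Rightarrow> nat \<Rightarrow> nat set \<Rightarrow> (nat \<Rightarrow> 'm action)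
                          \<Rightarrow> (nat \<Rightarrow> 'm config) \<Rightarrow> bool" where
  "execution sync n t d C acts cfs \<longleftrightarrow>
     cfs 0 = init_config \<and> (\<forall>k. step sync n t d C (acts k) (cfs k) (cfs (Suc k)))"

definition fair :: "nat set \<Rightarrow> (nat \<Rightarrow> 'm action) \<Rightarrow> (nat \<Rightarrow> 'm config) \<Rightarrow> bool" where
  "fair C acts cfs \<longleftrightarrow>
     (\<forall>k cp. cp \<in># net (cfs k) \<and> cp_dst cp \<in> C \<longrightarrow> (\<exists>k' \<ge> k. \<exists>Ds. acts k' = Recv cp Ds))"

definition time_progresses :: "(nat \<Rightarrow> 'm action) \<Rightarrow> bool" where
  "time_progresses acts \<longleftrightarrow> (\<forall>k. \<exists>k' \<ge> k. acts k' = Tick)"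

definition delivered :: "'m config \<Rightarrow> nat \<Rightarrow> 'm trip \<Rightarrow> bool" where
  "delivered cf q T \<longleftrightarrow> T \<in> set (dlog (loc cf q))"

end

theory Submission
  imports Defs
begin

text \<open>
  A correct process delivers a triplet only after accepting more than (n + t)/2 signatures of
  it.  Signatures of correct processes cannot be forged, a correct process signs at most one
  value per sequence number and sender, and a correct sender signs only what it broadcast; since
  n - t \<le> c, any two such quorums share a correct signer, which yields validity and no-duplicity.

  Whenever a correct process signs or delivers, its bundle reaches all but at most d correct
  processes.  A delivering bundle carries a quorum, so each of these c - d processes delivers as
  well.  For local delivery, suppose no correct process ever delivers: then the correct signers
  form a set S closed under reception, each member reaching at least c - d members of S, and
  double counting gives a correct process holding bundles from at least c - d > (n + t)/2
  signers, which forces it to deliver.  With unit transfer delays, c - d correct processes have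
  signed after one step and their bundles arrive one step later; the same counting then gives a
  correct process with a quorum after two steps (every correct process if d = 0), and its
  delivering bundle spreads in the third.
\<close>

section \<open>Counting and arithmetic\<close>

lemma first_transition:
  fixes P :: "nat \<Rightarrow> bool"
  assumes "\<not> P 0" and "P k"
  obtains s where "s < k" "\<not> P s" "P (Suc s)"
  using ex_least_nat_less[of P k] assms by blast

lemma ex_common_bound:
  fixes P :: "'a \<Rightarrow> nat \<Rightarrow> bool"
  assumes "finite A" and "\<forall>x\<in>A. \<exists>r. P x r" and "\<And>x r r'. r \<le> r' \<Longrightarrow> P x r \<Longrightarrow> P x r'"
  shows "\<exists>K. \<forall>x\<in>A. P x K"
proof -
  obtain f where f: "\<forall>x\<in>A. P x (f x)" using assms(2) by metis
  have "f x \<le> Max (f ` A)" if "x \<in> A" for x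
    using assms(1) that by simp
  then show ?thesis using f assms(3) by blast
qed

lemma card_Diff_bounded: "finite C \<Longrightarrow> D \<subseteq> C \<Longrightarrow> card D \<le> d \<Longrightarrow> card C - d \<le> card (C - D)"
  by (simp add: card_Diff_subset finite_subset)

lemma quorum_intersection:
  fixes Q1 Q2 C :: "nat set"
  assumes "Q1 \<subseteq> {1..n}" "Q2 \<subseteq> {1..n}" "n + t < 2 * card Q1" "n + t < 2 * card Q2"
    and "C \<subseteq> {1..n}" "n - t \<le> card C"
  shows "\<exists>k\<in>C. k \<in> Q1 \<and> k \<in> Q2"
proof (rule ccontr)
  assume "\<not> ?thesis"
  then have "Q1 \<inter> Q2 \<subseteq> {1..n} - C" using assms(1) by auto
  then have "card (Q1 \<inter> Q2) \<le> n - card C"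
    using card_mono[of "{1..n} - C"] card_Diff_subset[OF finite_subset[OF assms(5)] assms(5)] by simp
  moreover have "card (Q1 \<union> Q2) \<le> n"
    using card_mono[of "{1..n}" "Q1 \<union> Q2"] assms(1,2) by simp
  moreover have "card Q1 + card Q2 = card (Q1 \<union> Q2) + card (Q1 \<inter> Q2)"
    using card_Un_Int finite_subset[OF assms(1)] finite_subset[OF assms(2)] by blast
  ultimately show False using assms(3,4,6) by linarith
qed

lemma double_counting:
  fixes R :: "'a \<Rightarrow> 'b set"
  assumes "finite P" and "finite A" and "P \<noteq> {}" and "\<forall>b\<in>A. c \<le> card (P \<inter> R b)"
  shows "\<exists>q\<in>P. card A * c \<le> card P * card {b\<in>A. q \<in> R b}"
proof (rule ccontr)
  assume "\<not> ?thesis"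
  then have lt: "\<forall>q\<in>P. card P * card {b\<in>A. q \<in> R b} < card A * c" by auto
  have "(\<Sum>q\<in>P. card {b\<in>A. q \<in> R b}) = (\<Sum>q\<in>P. \<Sum>b\<in>A. of_bool (q \<in> R b))"
    using assms(2) by (simp add: Int_def conj_commute)
  also have "\<dots> = (\<Sum>b\<in>A. \<Sum>q\<in>P. of_bool (q \<in> R b))" by (rule sum.swap)
  also have "\<dots> = (\<Sum>b\<in>A. card (P \<inter> R b))"
    using assms(1) by (simp add: Int_def)
  finally have "card A * c \<le> (\<Sum>q\<in>P. card {b\<in>A. q \<in> R b})"
    using sum_mono[of A "\<lambda>_. c" "\<lambda>b. card (P \<inter> R b)"] assms(4) by simp
  then have "card P * (card A * c) \<le> (\<Sum>q\<in>P. card P * card {b\<in>A. q \<in> R b})"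
    unfolding sum_distrib_left[symmetric] by (rule mult_le_mono2)
  also have "\<dots> < (\<Sum>q\<in>P. card A * c)"
    using sum_strict_mono[OF assms(1,3), of "\<lambda>q. card P * card {b\<in>A. q \<in> R b}" "\<lambda>_. card A * c"] lt
    by simp
  finally show False by simp
qed

lemma quorum_of_correct:
  assumes "n - t \<le> (c::nat)" and "3 * t + 2 * d < n"
  shows "n + t < 2 * (c - d)"
  using assms by linarith

text \<open>The paper's two-step bound is at most 1, since \<open>c \<le> n \<le> 2 \<lfloor>(n + t)/2\<rfloor> + 1\<close>.\<close>

lemma two_step_condition_forces_d_zero:
  fixes c n t d :: nat
  assumes "c \<le> n"
    and "real d < (real c - of_int \<lfloor>(real n + real t) / 2\<rfloor>) / (of_int \<lfloor>(real n + real t) / 2\<rfloor> + 1)"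
  shows "d = 0"
proof (rule ccontr)
  define F where "F = \<lfloor>(real n + real t) / 2\<rfloor>"
  have "0 \<le> F" unfolding F_def by simp
  have "(real n + real t) / 2 < of_int F + 1"
    unfolding F_def by (rule real_of_int_floor_add_one_gt)
  then have F: "real n + real t < 2 * of_int F + 2" by (simp add: field_simps)
  assume "d \<noteq> 0"
  then have "1 < (real c - of_int F) / (of_int F + 1)" using assms(2) unfolding F_def by linarith
  then have "of_int F + 1 < real c - of_int F" using \<open>0 \<le> F\<close> by (simp add: less_divide_eq_1_pos)
  then have "2 * F + 1 < int c" by linarith
  then have "real_of_int (2 * F + 2) \<le> real_of_int (int c)" by (simp only: of_int_le_iff)
  then show False using F assms(1) by simp
qed

lemma three_step_condition:
  fixes c n t d :: nat
  assumes "real d < real c - sqrt (real c * ((real n + real t) / 2))"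
  shows "c * (n + t) < 2 * ((c - d) * (c - d))"
proof -
  let ?x = "sqrt (real c * ((real n + real t) / 2))"
  have "0 \<le> ?x" by simp
  then have "real d < real c" using assms by linarith
  then have "d < c" by simp
  have "?x * ?x < (real c - real d) * (real c - real d)"
    using assms \<open>0 \<le> ?x\<close> \<open>real d < real c\<close> by (intro mult_strict_mono) auto
  moreover have "?x * ?x = real c * ((real n + real t) / 2)" by simp
  ultimately have "real (c * (n + t)) < real (2 * ((c - d) * (c - d)))"
    using \<open>d < c\<close> by (simp add: of_nat_diff)
  then show ?thesis by (simp only: of_nat_less_iff)
qed

section \<open>The handlers of Algorithm 1\<close>

lemma mem_sig_set [simp]: "(k, T') \<in> sig_set T X \<longleftrightarrow> T' = T \<and> k \<in> X"
  unfolding sig_set_def by auto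

lemma valid_signers_sig_set [simp]: "valid_signers n T (sig_set T X) = X \<inter> {1..n}"
  unfolding valid_signers_def sig_set_def by auto

lemma valid_signers_subset: "valid_signers n T sigs \<subseteq> {1..n}"
  unfolding valid_signers_def by auto

lemma mem_valid_signersD: "k \<in> valid_signers n T sigs \<Longrightarrow> (k, T) \<in> sigs"
  unfolding valid_signers_def by auto

lemma on_invoke_eq:
  "on_invoke i m sn s =
     (let X = saved s (m,sn,i) \<union> {i}; M = Bundle m sn i (sig_set (m,sn,i) X) in
      (s\<lparr>saved := (saved s)((m,sn,i) := X), signed := insert (m,sn,i) (signed s),
         invoked := insert (m,sn) (invoked s), bclog := bclog s @ [M]\<rparr>, [M]))"
  unfolding on_invoke_def by (simp add: Let_def sign_def add_sigs_def)

definition accepted_signers :: "nat \<Rightarrow> nat \<Rightarrow> 'm \<Rightarrow> nat \<Rightarrow> nat \<Rightarrow> 'm sig set \<Rightarrow> 'm lstate \<Rightarrow> nat set" where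
  "accepted_signers n q m sn j sigs s =
     saved s (m,sn,j) \<union> valid_signers n (m,sn,j) sigs \<union> (if signed_some sn j s then {} else {q})"

lemma on_bundle_skip:
  "delivered_some sn j s \<or> j \<notin> valid_signers n (m,sn,j) sigs \<Longrightarrow> on_bundle n t q m sn j sigs s = (s, [])"
  unfolding on_bundle_def by (simp add: Let_def)

lemma on_bundle_accept:
  assumes "\<not> delivered_some sn j s" and "j \<in> valid_signers n (m,sn,j) sigs"
  shows "on_bundle n t q m sn j sigs s =
    (let A = accepted_signers n q m sn j sigs s; M = Bundle m sn j (sig_set (m,sn,j) A);
         outs = (if signed_some sn j s then [] else [M]) @ (if n + t < 2 * card A then [M] else [])
     in (s\<lparr>saved := (saved s)((m,sn,j) := A),
           signed := (if signed_some sn j s then signed s else insert (m,sn,j) (signed s)),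
           dlog := dlog s @ (if n + t < 2 * card A then [(m,sn,j)] else []),
           bclog := bclog s @ outs\<rparr>, outs))"
  using assms unfolding on_bundle_def accepted_signers_def
  by (auto simp add: Let_def sign_def add_sigs_def signed_some_def)

definition handler_step :: "nat \<Rightarrow> nat \<Rightarrow> nat \<Rightarrow> 'm lstate \<Rightarrow> 'm lstate \<Rightarrow> 'm msg list \<Rightarrow> bool" where
  "handler_step n t q s s' outs \<longleftrightarrow>
     (\<exists>m sn. on_invoke q m sn s = (s', outs)) \<or> (\<exists>m sn j sigs. on_bundle n t q m sn j sigs s = (s', outs))"

lemma handler_step_cases:
  assumes "handler_step n t q s s' outs"
  obtains (invoke) m sn where "on_invoke q m sn s = (s', outs)"
  | (skip) "s' = s" "outs = []"
  | (accept) m sn j sigs where "on_bundle n t q m sn j sigs s = (s', outs)"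
      "\<not> delivered_some sn j s" "j \<in> valid_signers n (m,sn,j) sigs"
  using assms on_bundle_skip unfolding handler_step_def by (metis prod.inject)

lemma handler_step_mono:
  assumes "handler_step n t q s s' outs"
  shows "signed s \<subseteq> signed s'" "saved s T \<subseteq> saved s' T" "set (dlog s) \<subseteq> set (dlog s')"
    "invoked s \<subseteq> invoked s'"
  using assms by (cases rule: handler_step_cases;
      auto simp: on_invoke_eq on_bundle_accept Let_def accepted_signers_def)+

lemma handler_step_sign_sends:
  assumes "handler_step n t q s s' outs" "(m,sn,j) \<notin> signed s" "(m,sn,j) \<in> signed s'"
  shows "Bundle m sn j (sig_set (m,sn,j) (saved s' (m,sn,j))) \<in> set outs
     \<and> q \<in> saved s' (m,sn,j) \<and> j \<in> saved s' (m,sn,j)"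
  using assms
  by (cases rule: handler_step_cases)
    (auto simp: on_invoke_eq on_bundle_accept Let_def accepted_signers_def split: if_splits)

lemma handler_step_deliver_sends:
  assumes "handler_step n t q s s' outs" "(m,sn,j) \<notin> set (dlog s)" "(m,sn,j) \<in> set (dlog s')"
  shows "Bundle m sn j (sig_set (m,sn,j) (saved s' (m,sn,j))) \<in> set outs"
  using assms
  by (cases rule: handler_step_cases)
    (auto simp: on_invoke_eq on_bundle_accept Let_def split: if_splits)

section \<open>Steps of an execution\<close>

lemma all_copies_mem:
  "cp \<in># all_copies n i \<tau> Ms Ds \<Longrightarrow> \<exists>q M. cp = (i, q, M, \<tau>) \<and> M \<in> set Ms"
proof (induction Ms arbitrary: Ds)
  case (Cons M Ms)
  then show ?case
    by (cases Ds) (fastforce simp: all_copies_def bcast_copies_def)+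
qed (simp add: all_copies_def)

lemma all_copies_nth:
  "p < length Ms \<Longrightarrow> length Ds = length Ms \<Longrightarrow> q \<in> {1..n} - Ds ! p
    \<Longrightarrow> (i, q, Ms ! p, \<tau>) \<in># all_copies n i \<tau> Ms Ds"
proof (induction Ms arbitrary: Ds p)
  case (Cons M Ms)
  then obtain D Ds' where "Ds = D # Ds'" by (cases Ds) auto
  with Cons show ?case
    by (cases p) (auto simp: all_copies_def bcast_copies_def)
qed simp

lemma all_copies_broadcast:
  assumes "adv_ok d C Ms Ds" and "M \<in> set Ms"
  shows "\<exists>D. D \<subseteq> C \<and> card D \<le> d \<and> (\<forall>q\<in>{1..n} - D. (i, q, M, \<tau>) \<in># all_copies n i \<tau> Ms Ds)"
proof -
  obtain p where p: "p < length Ms" "Ms ! p = M" using assms(2) by (auto simp: in_set_conv_nth)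
  then have "Ds ! p \<in> set Ds" using assms(1) by (simp add: adv_ok_def)
  then show ?thesis using assms(1) all_copies_nth[OF p(1)] p(2) unfolding adv_ok_def by metis
qed

definition bcast_in_transit :: "nat \<Rightarrow> nat \<Rightarrow> nat set \<Rightarrow> 'm config \<Rightarrow> nat \<Rightarrow> 'm msg \<Rightarrow> nat \<Rightarrow> bool" where
  "bcast_in_transit n d C cf q M \<tau> \<longleftrightarrow>
     (\<exists>D. D \<subseteq> C \<and> card D \<le> d \<and> (\<forall>q'\<in>{1..n} - D. (q, q', M, \<tau>) \<in># net cf))"

lemma step_InvokeD:
  assumes "step sync n t d C (Invoke i m sn Ds) cf cf'"
  shows "i \<in> C" "\<forall>m'. (m', sn) \<notin> invoked (loc cf i)"
    "adv_ok d C (snd (on_invoke i m sn (loc cf i))) Ds"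
    "cf' = cf\<lparr>loc := (loc cf)(i := fst (on_invoke i m sn (loc cf i))),
              net := net cf + all_copies n i (clock cf) (snd (on_invoke i m sn (loc cf i))) Ds\<rparr>"
  using assms unfolding step_def by (auto split: prod.splits)

lemma step_RecvD:
  assumes "step sync n t d C (Recv cp Ds) cf cf'" and "cp_msg cp = Bundle m sn j sigs"
  defines "q \<equiv> cp_dst cp"
  shows "cp \<in># net cf" "q \<in> C" "sync \<longrightarrow> cp_time cp < clock cf"
    "adv_ok d C (snd (on_bundle n t q m sn j sigs (loc cf q))) Ds"
    "cf' = cf\<lparr>loc := (loc cf)(q := fst (on_bundle n t q m sn j sigs (loc cf q))),
              net := (net cf - {#cp#}) + all_copies n q (clock cf) (snd (on_bundle n t q m sn j sigs (loc cf q))) Ds\<rparr>"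
  using assms unfolding step_def by (auto simp: Let_def split: prod.splits)

lemma step_local:
  assumes "step sync n t d C a cf cf'"
  shows "loc cf' q = loc cf q \<or> q \<in> C \<and> (\<exists>outs. handler_step n t q (loc cf q) (loc cf' q) outs \<and>
           (\<forall>M\<in>set outs. bcast_in_transit n d C cf' q M (clock cf)))"
proof (cases a)
  case (Invoke i m sn Ds)
  note st = step_InvokeD[OF assms[unfolded Invoke]]
  define outs where "outs = snd (on_invoke i m sn (loc cf i))"
  show ?thesis
  proof (cases "q = i")
    case True
    have "handler_step n t q (loc cf q) (loc cf' q) outs"
      using st(4) True unfolding handler_step_def outs_def by auto
    moreover have "\<exists>D. D \<subseteq> C \<and> card D \<le> d \<and> (\<forall>q'\<in>{1..n} - D. (q, q', M, clock cf) \<in># net cf')"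
      if "M \<in> set outs" for M
      using all_copies_broadcast[OF st(3) that[unfolded outs_def], of n i "clock cf"] st(4) True
      by (simp, blast)
    ultimately show ?thesis using st(1) True unfolding bcast_in_transit_def by blast
  qed (use st in simp)
next
  case (Recv cp Ds)
  obtain m sn j sigs where msg: "cp_msg cp = Bundle m sn j sigs" by (cases "cp_msg cp")
  note st = step_RecvD[OF assms[unfolded Recv] msg]
  define outs where "outs = snd (on_bundle n t q m sn j sigs (loc cf q))"
  show ?thesis
  proof (cases "q = cp_dst cp")
    case True
    have "handler_step n t q (loc cf q) (loc cf' q) outs"
      using st(5) True unfolding handler_step_def outs_def by (simp, blast)
    moreover have "\<exists>D. D \<subseteq> C \<and> card D \<le> d \<and> (\<forall>q'\<in>{1..n} - D. (q, q', M, clock cf) \<in># net cf')"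
      if "M \<in> set outs" for M
      using all_copies_broadcast[OF st(4) that[unfolded outs_def True], of n "cp_dst cp" "clock cf"] st(5) True
      by (simp, blast)
    ultimately show ?thesis using st(2) True unfolding bcast_in_transit_def by blast
  qed (use st in simp)
qed (use assms in \<open>auto simp: step_def\<close>)

lemma execution_step:
  "execution sync n t d C acts cfs \<Longrightarrow> step sync n t d C (acts k) (cfs k) (cfs (Suc k))"
  unfolding execution_def by blast

lemma execution_init: "execution sync n t d C acts cfs \<Longrightarrow> loc (cfs 0) q = init_lstate"
  unfolding execution_def init_config_def by simp

lemma step_mono:
  assumes "step sync n t d C a cf cf'"
  shows "signed (loc cf q) \<subseteq> signed (loc cf' q)" "saved (loc cf q) T \<subseteq> saved (loc cf' q) T"
    "set (dlog (loc cf q)) \<subseteq> set (dlog (loc cf' q))" "invoked (loc cf q) \<subseteq> invoked (loc cf' q)"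
  using step_local[OF assms, of q] handler_step_mono by (metis order_refl)+

lemma execution_mono:
  assumes ex: "execution sync n t d C acts cfs" and "k \<le> k'"
  shows saved_grows: "saved (loc (cfs k) q) T \<subseteq> saved (loc (cfs k') q) T"
    and dlog_grows: "set (dlog (loc (cfs k) q)) \<subseteq> set (dlog (loc (cfs k') q))"
    and invoked_grows: "invoked (loc (cfs k) q) \<subseteq> invoked (loc (cfs k') q)"
  using assms(2)
  by (induction k' rule: dec_induct; use step_mono[OF execution_step[OF ex]] in blast)+

lemma delivered_mono:
  "execution sync n t d C acts cfs \<Longrightarrow> k \<le> k' \<Longrightarrow> delivered (cfs k) q T \<Longrightarrow> delivered (cfs k') q T"
  unfolding delivered_def using dlog_grows by blast

lemma delivered_some_mono:
  "execution sync n t d C acts cfs \<Longrightarrow> k \<le> k'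
    \<Longrightarrow> delivered_some sn j (loc (cfs k) q) \<Longrightarrow> delivered_some sn j (loc (cfs k') q)"
  unfolding delivered_some_def using dlog_grows by blast

lemma invoke_effect:
  assumes ex: "execution sync n t d C acts cfs" and "acts k0 = Invoke i m sn Ds"
  shows "i \<in> C" "(m,sn) \<in> invoked (loc (cfs (Suc k0)) i)" "(m,sn,i) \<in> signed (loc (cfs (Suc k0)) i)"
  using step_InvokeD[OF execution_step[OF ex, of k0, unfolded assms(2)]] by (simp_all add: on_invoke_eq Let_def)

section \<open>Invariants of reachable configurations\<close>

definition local_inv :: "nat \<Rightarrow> nat \<Rightarrow> 'm lstate \<Rightarrow> bool" where
  "local_inv n t s \<longleftrightarrow>
     (\<forall>T. saved s T \<subseteq> {1..n}) \<and>
     (\<forall>m1 m2 sn j. (m1,sn,j) \<in> signed s \<longrightarrow> (m2,sn,j) \<in> signed s \<longrightarrow> m1 = m2) \<and>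
     (\<forall>m1 m2 sn. (m1,sn) \<in> invoked s \<longrightarrow> (m2,sn) \<in> invoked s \<longrightarrow> m1 = m2) \<and>
     (\<forall>m sn j. (m,sn,j) \<in> set (dlog s) \<longrightarrow>
        j \<in> saved s (m,sn,j) \<and> n + t < 2 * card (saved s (m,sn,j)) \<and> signed_some sn j s) \<and>
     (\<forall>sn j. length (filter (\<lambda>(m', sn', j'). sn' = sn \<and> j' = j) (dlog s)) \<le> 1)"

lemma local_invD:
  assumes "local_inv n t s"
  shows local_inv_saved: "saved s T \<subseteq> {1..n}"
    and local_inv_signed_unique: "(m1,sn,j) \<in> signed s \<Longrightarrow> (m2,sn,j) \<in> signed s \<Longrightarrow> m1 = m2"
    and local_inv_invoked_unique: "(m1,sn) \<in> invoked s \<Longrightarrow> (m2,sn) \<in> invoked s \<Longrightarrow> m1 = m2"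
    and local_inv_delivered: "(m,sn,j) \<in> set (dlog s) \<Longrightarrow>
        j \<in> saved s (m,sn,j) \<and> n + t < 2 * card (saved s (m,sn,j)) \<and> signed_some sn j s"
    and local_inv_dlog_unique: "length (filter (\<lambda>(m', sn', j'). sn' = sn \<and> j' = j) (dlog s)) \<le> 1"
  using assms unfolding local_inv_def by (simp_all del: split_paired_All)

lemma local_inv_init: "local_inv n t init_lstate"
  unfolding local_inv_def init_lstate_def by simp

lemma local_inv_delivered_signed:
  assumes "local_inv n t s" and "delivered_some sn j s"
  shows "signed_some sn j s"
proof -
  obtain m where "(m,sn,j) \<in> set (dlog s)" using assms(2) unfolding delivered_some_def by blast
  then show ?thesis using local_inv_delivered[OF assms(1)] by blast
qed

lemma finite_saved: "local_inv n t s \<Longrightarrow> finite (saved s T)"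
  by (meson finite_atLeastAtMost finite_subset local_inv_saved)

lemma local_inv_on_invoke:
  assumes inv: "local_inv n t s" and i: "i \<in> {1..n}"
    and fresh: "\<forall>m'. (m', sn) \<notin> invoked s" and unsigned: "\<not> signed_some sn i s"
  shows "local_inv n t (fst (on_invoke i m sn s))"
proof -
  let ?T = "(m,sn,i)"
  define s' where "s' = fst (on_invoke i m sn s)"
  have s': "saved s' = (saved s)(?T := saved s ?T \<union> {i})" "signed s' = insert ?T (signed s)"
    "invoked s' = insert (m,sn) (invoked s)" "dlog s' = dlog s"
    unfolding s'_def on_invoke_eq Let_def by simp_all
  have "\<forall>T. saved s' T \<subseteq> {1..n}"
    using local_inv_saved[OF inv] i by (auto simp: s')
  moreover have "\<forall>m1 m2 sn' j. (m1,sn',j) \<in> signed s' \<longrightarrow> (m2,sn',j) \<in> signed s' \<longrightarrow> m1 = m2"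
    using local_inv_signed_unique[OF inv] unsigned unfolding s' signed_some_def by blast
  moreover have "\<forall>m1 m2 sn'. (m1,sn') \<in> invoked s' \<longrightarrow> (m2,sn') \<in> invoked s' \<longrightarrow> m1 = m2"
    using local_inv_invoked_unique[OF inv] fresh unfolding s' by blast
  moreover have "\<forall>m' sn' j. (m',sn',j) \<in> set (dlog s') \<longrightarrow>
      j \<in> saved s' (m',sn',j) \<and> n + t < 2 * card (saved s' (m',sn',j)) \<and> signed_some sn' j s'"
  proof (intro allI impI)
    fix m' sn' j assume "(m',sn',j) \<in> set (dlog s')"
    moreover have "card (saved s (m',sn',j)) \<le> card (saved s' (m',sn',j))"
      using finite_saved[OF inv] by (simp add: s' card_insert_le)
    ultimately show "j \<in> saved s' (m',sn',j) \<and> n + t < 2 * card (saved s' (m',sn',j)) \<and> signed_some sn' j s'"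
      using local_inv_delivered[OF inv, of m' sn' j] unfolding signed_some_def by (auto simp: s')
  qed
  moreover have "\<forall>sn' j. length (filter (\<lambda>(m', sn'', j'). sn'' = sn' \<and> j' = j) (dlog s')) \<le> 1"
    using local_inv_dlog_unique[OF inv] by (simp add: s')
  ultimately show ?thesis
    unfolding s'_def[symmetric] local_inv_def by (intro conjI) assumption+
qed

lemma accepted_signers_bounds:
  assumes "local_inv n t s" and "q \<in> {1..n}"
  shows "saved s (m,sn,j) \<subseteq> accepted_signers n q m sn j sigs s" "accepted_signers n q m sn j sigs s \<subseteq> {1..n}"
  using local_inv_saved[OF assms(1), of "(m,sn,j)"] assms(2) valid_signers_subset[of n "(m,sn,j)" sigs]
  unfolding accepted_signers_def by auto

lemma local_inv_on_bundle:
  assumes inv: "local_inv n t s" and q: "q \<in> {1..n}"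
  shows "local_inv n t (fst (on_bundle n t q m sn j sigs s))"
proof (cases "delivered_some sn j s \<or> j \<notin> valid_signers n (m,sn,j) sigs")
  case True
  then show ?thesis using inv by (simp add: on_bundle_skip)
next
  case False
  let ?T = "(m,sn,j)"
  define A where "A = accepted_signers n q m sn j sigs s"
  define s' where "s' = fst (on_bundle n t q m sn j sigs s)"
  have s': "saved s' = (saved s)(?T := A)"
    "signed s' = (if signed_some sn j s then signed s else insert ?T (signed s))"
    "invoked s' = invoked s" "dlog s' = dlog s @ (if n + t < 2 * card A then [?T] else [])"
    using False unfolding s'_def A_def by (simp_all add: on_bundle_accept Let_def)
  note A = accepted_signers_bounds[OF inv q, of m sn j sigs, folded A_def]
  have signed_some': "signed_some sn' j' s' \<longleftrightarrow> signed_some sn' j' s \<or> (sn',j') = (sn,j)" for sn' j'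
    unfolding signed_some_def s' by (auto simp: signed_some_def)
  have "\<forall>T. saved s' T \<subseteq> {1..n}"
    using local_inv_saved[OF inv] A(2) by (simp add: s')
  moreover have "\<forall>m1 m2 sn' j'. (m1,sn',j') \<in> signed s' \<longrightarrow> (m2,sn',j') \<in> signed s' \<longrightarrow> m1 = m2"
    using local_inv_signed_unique[OF inv] unfolding s' signed_some_def by auto
  moreover have "\<forall>m1 m2 sn'. (m1,sn') \<in> invoked s' \<longrightarrow> (m2,sn') \<in> invoked s' \<longrightarrow> m1 = m2"
    using local_inv_invoked_unique[OF inv] unfolding s' by blast
  moreover have "\<forall>m' sn' j'. (m',sn',j') \<in> set (dlog s') \<longrightarrow>
      j' \<in> saved s' (m',sn',j') \<and> n + t < 2 * card (saved s' (m',sn',j')) \<and> signed_some sn' j' s'"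
  proof (intro allI impI)
    fix m' sn' j' assume dl: "(m',sn',j') \<in> set (dlog s')"
    have "card (saved s T) \<le> card (saved s' T)" for T
      using A finite_subset[OF A(2)] by (simp add: s' card_mono)
    moreover have "j \<in> A" using False unfolding A_def accepted_signers_def by blast
    ultimately show "j' \<in> saved s' (m',sn',j') \<and> n + t < 2 * card (saved s' (m',sn',j')) \<and> signed_some sn' j' s'"
      using dl local_inv_delivered[OF inv, of m' sn' j'] signed_some'
      by (fastforce simp: s' split: if_splits)
  qed
  moreover have "filter (\<lambda>(m', sn', j'). sn' = sn \<and> j' = j) (dlog s) = []"
    using False unfolding delivered_some_def by (auto simp: filter_empty_conv)
  then have "\<forall>sn' j'. length (filter (\<lambda>(m', sn'', j''). sn'' = sn' \<and> j'' = j') (dlog s')) \<le> 1"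
    using local_inv_dlog_unique[OF inv] by (simp add: s')
  ultimately show ?thesis
    unfolding s'_def[symmetric] local_inv_def by (intro conjI) assumption+
qed

definition bclog_bounded :: "'m lstate \<Rightarrow> bool" where
  "bclog_bounded s \<longleftrightarrow> (\<forall>sn j. length (filter (\<lambda>M. msg_key M = (sn,j)) (bclog s))
                           \<le> of_bool (signed_some sn j s) + of_bool (delivered_some sn j s))"

lemma bclog_bounded_le_two:
  assumes "bclog_bounded s"
  shows "length (filter (\<lambda>M. msg_key M = (sn,j)) (bclog s)) \<le> 2"
proof -
  have "length (filter (\<lambda>M. msg_key M = (sn,j)) (bclog s))
          \<le> of_bool (signed_some sn j s) + of_bool (delivered_some sn j s)"
    using assms unfolding bclog_bounded_def by blast
  then show ?thesis by (cases "signed_some sn j s"; cases "delivered_some sn j s") simp_all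
qed

lemma bclog_bounded_init: "bclog_bounded init_lstate"
  unfolding bclog_bounded_def init_lstate_def by simp

lemma bclog_bounded_on_invoke:
  assumes "bclog_bounded s" and "\<not> signed_some sn i s" and "\<not> delivered_some sn i s"
  shows "bclog_bounded (fst (on_invoke i m sn s))"
  unfolding bclog_bounded_def
proof (intro allI)
  fix sn' j
  define s' where "s' = fst (on_invoke i m sn s)"
  have bound: "length (filter (\<lambda>M. msg_key M = (sn'',j'')) (bclog s))
                 \<le> of_bool (signed_some sn'' j'' s) + of_bool (delivered_some sn'' j'' s)" for sn'' j''
    using assms(1) unfolding bclog_bounded_def by blast
  have "filter (\<lambda>M. msg_key M = (sn',j)) (bclog s') =
      filter (\<lambda>M. msg_key M = (sn',j)) (bclog s) @ (if (sn',j) = (sn,i) then [Bundle m sn i (sig_set (m,sn,i) (saved s (m,sn,i) \<union> {i}))] else [])"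
    "signed_some sn' j s' \<longleftrightarrow> signed_some sn' j s \<or> (sn',j) = (sn,i)"
    "delivered_some sn' j s' = delivered_some sn' j s"
    unfolding s'_def signed_some_def delivered_some_def by (auto simp: on_invoke_eq Let_def)
  then show "length (filter (\<lambda>M. msg_key M = (sn',j)) (bclog s'))
               \<le> of_bool (signed_some sn' j s') + of_bool (delivered_some sn' j s')"
    using bound[of sn' j] assms(2,3) by (cases "(sn',j) = (sn,i)") auto
qed

lemma bclog_bounded_on_bundle:
  assumes "bclog_bounded s"
  shows "bclog_bounded (fst (on_bundle n t q m sn j sigs s))"
proof (cases "delivered_some sn j s \<or> j \<notin> valid_signers n (m,sn,j) sigs")
  case True
  then show ?thesis using assms by (simp add: on_bundle_skip)
next
  case False
  define A where "A = accepted_signers n q m sn j sigs s"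
  define M where "M = Bundle m sn j (sig_set (m,sn,j) A)"
  define s' where "s' = fst (on_bundle n t q m sn j sigs s)"
  have bclog: "bclog s' = bclog s @ (if signed_some sn j s then [] else [M]) @ (if n + t < 2 * card A then [M] else [])"
    using False unfolding s'_def A_def M_def by (simp add: on_bundle_accept Let_def)
  have s': "signed s' = (if signed_some sn j s then signed s else insert (m,sn,j) (signed s))"
    "dlog s' = dlog s @ (if n + t < 2 * card A then [(m,sn,j)] else [])"
    using False unfolding s'_def A_def by (simp_all add: on_bundle_accept Let_def)
  have signed_some': "signed_some sn' j' s' \<longleftrightarrow> signed_some sn' j' s \<or> (sn',j') = (sn,j)" for sn' j'
    unfolding signed_some_def s' by (auto simp: signed_some_def)
  have delivered_some': "delivered_some sn' j' s' \<longleftrightarrow> delivered_some sn' j' s \<or> n + t < 2 * card A \<and> (sn',j') = (sn,j)"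
    for sn' j'
    unfolding delivered_some_def s' by auto
  have bound: "length (filter (\<lambda>M. msg_key M = (sn',j')) (bclog s))
                 \<le> of_bool (signed_some sn' j' s) + of_bool (delivered_some sn' j' s)" for sn' j'
    using assms unfolding bclog_bounded_def by blast
  have "length (filter (\<lambda>M. msg_key M = (sn',j')) (bclog s'))
          \<le> of_bool (signed_some sn' j' s') + of_bool (delivered_some sn' j' s')" for sn' j'
  proof (cases "(sn',j') = (sn,j)")
    case True
    then show ?thesis
      using bound[of sn j] False signed_some' delivered_some'
      by (cases "signed_some sn j s") (auto simp: bclog M_def)
  next
    case False
    then show ?thesis
      using bound[of sn' j'] signed_some' delivered_some' by (auto simp: bclog M_def)
  qed
  then show ?thesis unfolding bclog_bounded_def s'_def by blast
qed

definition genuine_sigs :: "nat set \<Rightarrow> (nat \<Rightarrow> 'm lstate) \<Rightarrow> 'm sig set \<Rightarrow> bool" where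
  "genuine_sigs C ls X \<longleftrightarrow> (\<forall>(k, T) \<in> X. k \<in> C \<longrightarrow> T \<in> signed (ls k))"

lemma genuine_sigs_mono:
  "genuine_sigs C ls X \<Longrightarrow> Y \<subseteq> X \<Longrightarrow> (\<And>k. signed (ls k) \<subseteq> signed (ls' k)) \<Longrightarrow> genuine_sigs C ls' Y"
  unfolding genuine_sigs_def by blast

lemma genuine_sigs_sig_set:
  "genuine_sigs C ls (sig_set T X) \<longleftrightarrow> (\<forall>k \<in> X \<inter> C. T \<in> signed (ls k))"
  unfolding genuine_sigs_def sig_set_def by auto

lemma genuine_sigs_net_update:
  assumes old: "\<forall>cp\<in>#N. genuine_sigs C ls (msg_sigs (cp_msg cp))"
    and mono: "\<And>k. signed (ls k) \<subseteq> signed (ls' k)"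
    and new: "\<forall>M\<in>set outs. genuine_sigs C ls' (msg_sigs M)"
  shows "\<forall>cp\<in>#N - X + all_copies n q \<tau> outs Ds. genuine_sigs C ls' (msg_sigs (cp_msg cp))"
proof
  fix cp assume "cp \<in># N - X + all_copies n q \<tau> outs Ds"
  then consider "cp \<in># N" | "cp_msg cp \<in> set outs"
    by (auto dest: in_diffD all_copies_mem)
  then show "genuine_sigs C ls' (msg_sigs (cp_msg cp))"
  proof cases
    case 1
    then show ?thesis using old mono unfolding genuine_sigs_def by blast
  qed (use new in blast)
qed

text \<open>Byzantine processes can only use signatures of correct processes they have received, so
  unforgeability becomes the invariant that every such signature, wherever it occurs, is genuine.\<close>

definition exec_inv :: "nat \<Rightarrow> nat \<Rightarrow> nat set \<Rightarrow> 'm config \<Rightarrow> bool" where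
  "exec_inv n t C cf \<longleftrightarrow>
     (\<forall>q\<in>C. local_inv n t (loc cf q) \<and> bclog_bounded (loc cf q)) \<and>
     (\<forall>q\<in>C. \<forall>T. genuine_sigs C (loc cf) (sig_set T (saved (loc cf q) T))) \<and>
     (\<forall>cp\<in>#net cf. genuine_sigs C (loc cf) (msg_sigs (cp_msg cp))) \<and>
     genuine_sigs C (loc cf) (bknow cf) \<and>
     (\<forall>q\<in>C. \<forall>k\<in>C. \<forall>m sn. (m,sn,k) \<in> signed (loc cf q) \<longrightarrow> (m,sn) \<in> invoked (loc cf k))"

lemma exec_invD:
  assumes "exec_inv n t C cf"
  shows exec_inv_local: "q \<in> C \<Longrightarrow> local_inv n t (loc cf q)"
    and exec_inv_bclog: "q \<in> C \<Longrightarrow> bclog_bounded (loc cf q)"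
    and exec_inv_saved: "q \<in> C \<Longrightarrow> k \<in> C \<Longrightarrow> k \<in> saved (loc cf q) T \<Longrightarrow> T \<in> signed (loc cf k)"
    and exec_inv_net: "\<forall>cp\<in>#net cf. genuine_sigs C (loc cf) (msg_sigs (cp_msg cp))"
    and exec_inv_bknow: "genuine_sigs C (loc cf) (bknow cf)"
    and exec_inv_invoked: "q \<in> C \<Longrightarrow> k \<in> C \<Longrightarrow> (m,sn,k) \<in> signed (loc cf q) \<Longrightarrow> (m,sn) \<in> invoked (loc cf k)"
  using assms unfolding exec_inv_def genuine_sigs_sig_set by blast+

lemma exec_inv_init: "exec_inv n t C init_config"
  using local_inv_init[of n t] bclog_bounded_init unfolding exec_inv_def init_config_def genuine_sigs_def init_lstate_def
  by (auto simp: sig_set_def)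

lemma exec_inv_invoke:
  assumes inv: "exec_inv n t C cf" and Cn: "C \<subseteq> {1..n}"
    and st: "step sync n t d C (Invoke i m sn Ds) cf cf'"
  shows "exec_inv n t C cf'"
proof -
  note st = step_InvokeD[OF st]
  let ?T = "(m,sn,i)" and ?s = "loc cf i"
  define s' where "s' = fst (on_invoke i m sn ?s)"
  define X where "X = saved ?s ?T \<union> {i}"
  have s': "saved s' = (saved ?s)(?T := X)" "signed s' = insert ?T (signed ?s)"
    "invoked s' = insert (m,sn) (invoked ?s)"
    "snd (on_invoke i m sn ?s) = [Bundle m sn i (sig_set ?T X)]"
    unfolding s'_def X_def on_invoke_eq Let_def by simp_all
  have cf': "loc cf' = (loc cf)(i := s')"
    "net cf' = net cf + all_copies n i (clock cf) [Bundle m sn i (sig_set ?T X)] Ds"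
    "bknow cf' = bknow cf"
    using st(4) s'(4) by (simp_all add: s'_def)
  have signed_mono: "signed (loc cf k) \<subseteq> signed (loc cf' k)" for k
    by (auto simp: cf' s')
  have unsigned: "\<not> signed_some sn i ?s"
    using exec_inv_invoked[OF inv st(1) st(1)] st(2) unfolding signed_some_def by blast
  have new_genuine: "genuine_sigs C (loc cf') (sig_set ?T X)"
    using exec_inv_saved[OF inv st(1)] signed_mono unfolding genuine_sigs_sig_set X_def
    by (auto simp: cf' s')
  have "\<not> delivered_some sn i ?s"
    using unsigned local_inv_delivered_signed[OF exec_inv_local[OF inv st(1)]] by blast
  then have "\<forall>q\<in>C. local_inv n t (loc cf' q) \<and> bclog_bounded (loc cf' q)"
    using exec_inv_local[OF inv] exec_inv_bclog[OF inv] st(1) Cn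
      local_inv_on_invoke[OF exec_inv_local[OF inv st(1)] _ st(2) unsigned]
      bclog_bounded_on_invoke[OF exec_inv_bclog[OF inv st(1)] unsigned]
    by (auto simp: cf' s'_def)
  moreover have "\<forall>q\<in>C. \<forall>T. genuine_sigs C (loc cf') (sig_set T (saved (loc cf' q) T))"
    using exec_inv_saved[OF inv] signed_mono new_genuine unfolding genuine_sigs_sig_set
    by (auto simp: cf' s')
  moreover have "\<forall>cp\<in>#net cf'. genuine_sigs C (loc cf') (msg_sigs (cp_msg cp))"
  proof -
    have "\<forall>M\<in>set [Bundle m sn i (sig_set ?T X)]. genuine_sigs C (loc cf') (msg_sigs M)"
      using new_genuine by simp
    from genuine_sigs_net_update[OF exec_inv_net[OF inv] signed_mono this,
        where X="{#}" and n=n and q=i and \<tau>="clock cf" and Ds=Ds]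
    show ?thesis by (simp only: cf'(2) diff_empty)
  qed
  moreover have "genuine_sigs C (loc cf') (bknow cf')"
    using genuine_sigs_mono[OF exec_inv_bknow[OF inv] subset_refl signed_mono] by (simp only: cf'(3))
  moreover have "\<forall>q\<in>C. \<forall>k\<in>C. \<forall>m sn. (m,sn,k) \<in> signed (loc cf' q) \<longrightarrow> (m,sn) \<in> invoked (loc cf' k)"
    using exec_inv_invoked[OF inv] by (auto simp: cf' s')
  ultimately show ?thesis unfolding exec_inv_def by (intro conjI) assumption+
qed

lemma accepted_signers_genuine:
  assumes inv: "exec_inv n t C cf" and q: "q \<in> C" and sigs: "genuine_sigs C (loc cf) sigs"
    and mono: "\<And>k. signed (loc cf k) \<subseteq> signed (ls k)"
    and own: "\<not> signed_some sn j (loc cf q) \<Longrightarrow> (m,sn,j) \<in> signed (ls q)"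
  shows "genuine_sigs C ls (sig_set (m,sn,j) (accepted_signers n q m sn j sigs (loc cf q)))"
  unfolding genuine_sigs_sig_set
proof
  fix k assume k: "k \<in> accepted_signers n q m sn j sigs (loc cf q) \<inter> C"
  then consider "k \<in> saved (loc cf q) (m,sn,j)" | "(k, (m,sn,j)) \<in> sigs" | "k = q" "\<not> signed_some sn j (loc cf q)"
    unfolding accepted_signers_def by (auto dest: mem_valid_signersD split: if_splits)
  then show "(m,sn,j) \<in> signed (ls k)"
  proof cases
    case 1
    then show ?thesis using exec_inv_saved[OF inv q] k mono by blast
  next
    case 2
    then show ?thesis using sigs k mono unfolding genuine_sigs_def by blast
  qed (use own in simp)
qed

lemma exec_inv_recv:
  assumes inv: "exec_inv n t C cf" and Cn: "C \<subseteq> {1..n}"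
    and st: "step sync n t d C (Recv cp Ds) cf cf'"
  shows "exec_inv n t C cf'"
proof -
  obtain m sn j sigs where msg: "cp_msg cp = Bundle m sn j sigs" by (cases "cp_msg cp")
  define q where "q = cp_dst cp"
  note st = step_RecvD[OF st msg, folded q_def]
  let ?T = "(m,sn,j)" and ?s = "loc cf q"
  have rest: "genuine_sigs C (loc cf) (msg_sigs (cp_msg cp'))" if "cp' \<in># net cf - {#cp#}" for cp'
    using exec_inv_net[OF inv] that by (blast dest: in_diffD)
  show ?thesis
  proof (cases "delivered_some sn j ?s \<or> j \<notin> valid_signers n ?T sigs")
    case True
    then have "cf' = cf\<lparr>net := net cf - {#cp#}\<rparr>"
      using st(5) by (simp add: on_bundle_skip all_copies_def)
    then show ?thesis using inv rest unfolding exec_inv_def by simp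
  next
    case False
    define A where "A = accepted_signers n q m sn j sigs ?s"
    define M where "M = Bundle m sn j (sig_set ?T A)"
    define s' where "s' = fst (on_bundle n t q m sn j sigs ?s)"
    define outs where "outs = snd (on_bundle n t q m sn j sigs ?s)"
    have s': "saved s' = (saved ?s)(?T := A)"
      "signed s' = (if signed_some sn j ?s then signed ?s else insert ?T (signed ?s))"
      "invoked s' = invoked ?s" "set outs \<subseteq> {M}"
      using False unfolding s'_def outs_def A_def M_def by (auto simp add: on_bundle_accept Let_def)
    have cf': "loc cf' = (loc cf)(q := s')" "net cf' = net cf - {#cp#} + all_copies n q (clock cf) outs Ds"
      "bknow cf' = bknow cf"
      using st(5) by (simp_all add: s'_def outs_def)
    have signed_mono: "signed (loc cf k) \<subseteq> signed (loc cf' k)" for k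
      by (auto simp: cf' s')
    have msg_genuine: "genuine_sigs C (loc cf) sigs"
      using exec_inv_net[OF inv] st(1) msg by fastforce
    have new_genuine: "genuine_sigs C (loc cf') (sig_set ?T A)"
      unfolding A_def using msg_genuine signed_mono
      by (rule accepted_signers_genuine[OF inv st(2)]) (simp add: cf' s')
    have "\<forall>q'\<in>C. local_inv n t (loc cf' q') \<and> bclog_bounded (loc cf' q')"
      using exec_inv_local[OF inv] exec_inv_bclog[OF inv] st(2) Cn
        local_inv_on_bundle[OF exec_inv_local[OF inv st(2)]] bclog_bounded_on_bundle[OF exec_inv_bclog[OF inv st(2)]]
      by (auto simp: cf' s'_def)
    moreover have "\<forall>q'\<in>C. \<forall>T. genuine_sigs C (loc cf') (sig_set T (saved (loc cf' q') T))"
      using exec_inv_saved[OF inv] signed_mono new_genuine unfolding genuine_sigs_sig_set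
      by (auto simp: cf' s')
    moreover have "\<forall>cp'\<in>#net cf'. genuine_sigs C (loc cf') (msg_sigs (cp_msg cp'))"
    proof -
      have "\<forall>M\<in>set outs. genuine_sigs C (loc cf') (msg_sigs M)"
        using new_genuine s'(4) unfolding M_def by auto
      from genuine_sigs_net_update[OF exec_inv_net[OF inv] signed_mono this,
          where X="{#cp#}" and n=n and q=q and \<tau>="clock cf" and Ds=Ds]
      show ?thesis by (simp only: cf'(2))
    qed
    moreover have "genuine_sigs C (loc cf') (bknow cf')"
      using genuine_sigs_mono[OF exec_inv_bknow[OF inv] subset_refl signed_mono] by (simp only: cf'(3))
    moreover have "\<forall>q'\<in>C. \<forall>k\<in>C. \<forall>m' sn'. (m',sn',k) \<in> signed (loc cf' q') \<longrightarrow> (m',sn') \<in> invoked (loc cf' k)"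
    proof (intro ballI allI impI)
      fix q' k m' sn' assume q': "q' \<in> C" and k: "k \<in> C" and sig: "(m',sn',k) \<in> signed (loc cf' q')"
      have "(k, (m',sn',k)) \<in> sigs" if "(m',sn',k) \<notin> signed (loc cf q')"
        using that sig False by (auto simp: cf' s' dest: mem_valid_signersD split: if_splits)
      then have "(m',sn',k) \<in> signed (loc cf q') \<or> (m',sn',k) \<in> signed (loc cf k)"
        using msg_genuine k unfolding genuine_sigs_def by blast
      then show "(m',sn') \<in> invoked (loc cf' k)"
        using exec_inv_invoked[OF inv q' k] exec_inv_invoked[OF inv k k] by (auto simp: cf' s')
    qed
    ultimately show ?thesis unfolding exec_inv_def by (intro conjI) assumption+
  qed
qed

lemma exec_inv_step:
  assumes "exec_inv n t C cf" and "C \<subseteq> {1..n}" and st: "step sync n t d C a cf cf'"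
  shows "exec_inv n t C cf'"
proof (cases a)
  case Invoke
  then show ?thesis using exec_inv_invoke[OF assms(1,2)] st by simp
next
  case Recv
  then show ?thesis using exec_inv_recv[OF assms(1,2)] st by simp
next
  case (ByzSend b q M)
  then show ?thesis
    using assms(1) st unfolding step_def exec_inv_def genuine_sigs_def by auto
next
  case (ByzRecv cp)
  then show ?thesis
    using assms(1) st unfolding step_def exec_inv_def genuine_sigs_def by (auto dest: in_diffD)
next
  case Tick
  then show ?thesis using assms(1) st unfolding step_def exec_inv_def by auto
qed

lemma exec_inv_reachable:
  assumes "execution sync n t d C acts cfs" and "C \<subseteq> {1..n}"
  shows "exec_inv n t C (cfs k)"
proof (induction k)
  case 0
  then show ?case using assms(1) exec_inv_init unfolding execution_def by simp
next
  case (Suc k)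
  then show ?case using assms exec_inv_step unfolding execution_def by blast
qed

section \<open>Safety\<close>

lemma delivered_invoked:
  assumes ex: "execution sync n t d C acts cfs" and Cn: "C \<subseteq> {1..n}"
    and "q \<in> C" "j \<in> C" "delivered (cfs k) q (m,sn,j)"
  shows "(m,sn) \<in> invoked (loc (cfs k) j)"
proof -
  note inv = exec_inv_reachable[OF ex Cn, of k]
  have "j \<in> saved (loc (cfs k) q) (m,sn,j)"
    using local_inv_delivered[OF exec_inv_local[OF inv \<open>q \<in> C\<close>]] assms(5) unfolding delivered_def by blast
  then show ?thesis
    using exec_inv_saved[OF inv] exec_inv_invoked[OF inv] assms(3,4) by blast
qed

lemma delivered_agree:
  assumes ex: "execution sync n t d C acts cfs" and Cn: "C \<subseteq> {1..n}" and cC: "n - t \<le> card C"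
    and "q1 \<in> C" "q2 \<in> C" "delivered (cfs k1) q1 (m1,sn,j)" "delivered (cfs k2) q2 (m2,sn,j)"
  shows "m1 = m2"
proof -
  define k where "k = max k1 k2"
  note inv = exec_inv_reachable[OF ex Cn, of k]
  have "(m1,sn,j) \<in> set (dlog (loc (cfs k) q1))" "(m2,sn,j) \<in> set (dlog (loc (cfs k) q2))"
    using delivered_mono[OF ex] assms(6,7) unfolding k_def delivered_def by (meson max.cobounded1 max.cobounded2)+
  then obtain k' where "k' \<in> C" "k' \<in> saved (loc (cfs k) q1) (m1,sn,j)" "k' \<in> saved (loc (cfs k) q2) (m2,sn,j)"
    using quorum_intersection[OF _ _ _ _ Cn cC] local_inv_saved local_inv_delivered
      exec_inv_local[OF inv assms(4)] exec_inv_local[OF inv assms(5)] by metis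
  then show ?thesis
    using exec_inv_saved[OF inv] assms(4,5) local_inv_signed_unique[OF exec_inv_local[OF inv \<open>k' \<in> C\<close>]]
    by blast
qed

lemma invoked_unique:
  assumes ex: "execution sync n t d C acts cfs" and Cn: "C \<subseteq> {1..n}" and "j \<in> C"
    and "(m1,sn) \<in> invoked (loc (cfs k1) j)" "(m2,sn) \<in> invoked (loc (cfs k2) j)"
  shows "m1 = m2"
  using local_inv_invoked_unique[OF exec_inv_local[OF exec_inv_reachable[OF ex Cn, of "max k1 k2"] \<open>j \<in> C\<close>]]
    invoked_grows[OF ex] assms(4,5) by (meson max.cobounded1 max.cobounded2 subsetD)

lemma delivered_some_invoked:
  assumes ex: "execution sync n t d C acts cfs" and Cn: "C \<subseteq> {1..n}" and "q \<in> C" "j \<in> C"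
    and "(m,sn) \<in> invoked (loc (cfs k0) j)" and "delivered_some sn j (loc (cfs k) q)"
  shows "delivered (cfs k) q (m,sn,j)"
proof -
  obtain m' where "delivered (cfs k) q (m',sn,j)"
    using assms(6) unfolding delivered_some_def delivered_def by blast
  moreover from this have "m' = m"
    using delivered_invoked[OF ex Cn assms(3,4)] invoked_unique[OF ex Cn assms(4) _ assms(5)] by blast
  ultimately show ?thesis by simp
qed

lemma signed_some_invoked:
  assumes ex: "execution sync n t d C acts cfs" and Cn: "C \<subseteq> {1..n}" and "q \<in> C" "j \<in> C"
    and "(m,sn) \<in> invoked (loc (cfs k0) j)" and "signed_some sn j (loc (cfs k) q)"
  shows "(m,sn,j) \<in> signed (loc (cfs k) q)"
proof -
  obtain m' where "(m',sn,j) \<in> signed (loc (cfs k) q)"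
    using assms(6) unfolding signed_some_def by blast
  moreover from this have "m' = m"
    using exec_inv_invoked[OF exec_inv_reachable[OF ex Cn] assms(3,4)]
      invoked_unique[OF ex Cn assms(4) _ assms(5)] by blast
  ultimately show ?thesis by simp
qed

section \<open>Signing, delivering and receiving bundles\<close>

lemma sign_broadcast:
  assumes ex: "execution sync n t d C acts cfs" and Cn: "C \<subseteq> {1..n}"
    and "(m,sn,j) \<notin> signed (loc (cfs s) q)" and "(m,sn,j) \<in> signed (loc (cfs (Suc s)) q)"
  shows "q \<in> C \<and> (\<exists>X. X \<subseteq> {1..n} \<and> q \<in> X \<and> j \<in> X \<and>
           bcast_in_transit n d C (cfs (Suc s)) q (Bundle m sn j (sig_set (m,sn,j) X)) (clock (cfs s)))"
proof -
  obtain outs where q: "q \<in> C" and h: "handler_step n t q (loc (cfs s) q) (loc (cfs (Suc s)) q) outs"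
    and sent: "\<forall>M\<in>set outs. bcast_in_transit n d C (cfs (Suc s)) q M (clock (cfs s))"
    using step_local[OF execution_step[OF ex, of s], of q] assms(3,4) by fastforce
  moreover have "saved (loc (cfs (Suc s)) q) (m,sn,j) \<subseteq> {1..n}"
    using local_inv_saved[OF exec_inv_local[OF exec_inv_reachable[OF ex Cn] q]] .
  moreover have "bcast_in_transit n d C (cfs (Suc s)) q
      (Bundle m sn j (sig_set (m,sn,j) (saved (loc (cfs (Suc s)) q) (m,sn,j)))) (clock (cfs s))"
    using handler_step_sign_sends[OF h assms(3,4)] sent by blast
  ultimately show ?thesis
    using handler_step_sign_sends[OF h assms(3,4)] by blast
qed

lemma deliver_broadcast:
  assumes ex: "execution sync n t d C acts cfs" and Cn: "C \<subseteq> {1..n}"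
    and "\<not> delivered (cfs s) q (m,sn,j)" and "delivered (cfs (Suc s)) q (m,sn,j)"
  shows "q \<in> C \<and> (\<exists>X. X \<subseteq> {1..n} \<and> j \<in> X \<and> n + t < 2 * card X \<and>
           bcast_in_transit n d C (cfs (Suc s)) q (Bundle m sn j (sig_set (m,sn,j) X)) (clock (cfs s)))"
proof -
  obtain outs where q: "q \<in> C" and h: "handler_step n t q (loc (cfs s) q) (loc (cfs (Suc s)) q) outs"
    and sent: "\<forall>M\<in>set outs. bcast_in_transit n d C (cfs (Suc s)) q M (clock (cfs s))"
  proof -
    have "loc (cfs (Suc s)) q \<noteq> loc (cfs s) q" using assms(3,4) unfolding delivered_def by auto
    then show thesis using that step_local[OF execution_step[OF ex, of s], of q] by blast
  qed
  note inv = exec_inv_local[OF exec_inv_reachable[OF ex Cn] q, of "Suc s"]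
  let ?X = "saved (loc (cfs (Suc s)) q) (m,sn,j)"
  have "Bundle m sn j (sig_set (m,sn,j) ?X) \<in> set outs"
    using handler_step_deliver_sends[OF h] assms(3,4) unfolding delivered_def by blast
  then have "bcast_in_transit n d C (cfs (Suc s)) q (Bundle m sn j (sig_set (m,sn,j) ?X)) (clock (cfs s))"
    using sent by blast
  moreover have "j \<in> ?X \<and> n + t < 2 * card ?X"
    using local_inv_delivered[OF inv, of m sn j] assms(4) unfolding delivered_def by simp
  ultimately show ?thesis
    using q local_inv_saved[OF inv, of "(m,sn,j)"] by blast
qed

lemma recv_bundle:
  assumes ex: "execution sync n t d C acts cfs"
    and recv: "acts r = Recv (p, q, Bundle m sn j (sig_set (m,sn,j) X), \<tau>) Ds"
    and "j \<in> X" and "X \<subseteq> {1..n}"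
  shows "delivered_some sn j (loc (cfs r) q) \<or>
    X \<subseteq> saved (loc (cfs (Suc r)) q) (m,sn,j) \<and> signed_some sn j (loc (cfs (Suc r)) q) \<and>
    (n + t < 2 * card (saved (loc (cfs (Suc r)) q) (m,sn,j)) \<longrightarrow> delivered (cfs (Suc r)) q (m,sn,j))"
proof (cases "delivered_some sn j (loc (cfs r) q)")
  case False
  let ?T = "(m,sn,j)" and ?s = "loc (cfs r) q" and ?s' = "loc (cfs (Suc r)) q"
  define A where "A = accepted_signers n q m sn j (sig_set ?T X) ?s"
  have valid: "valid_signers n ?T (sig_set ?T X) = X" using assms(4) by auto
  then have jv: "j \<in> valid_signers n ?T (sig_set ?T X)" using assms(3) by simp
  have "?s' = fst (on_bundle n t q m sn j (sig_set ?T X) ?s)"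
    using step_RecvD(5)[OF execution_step[OF ex, of r, unfolded recv]] by simp
  then have s': "saved ?s' ?T = A" "?T \<in> signed ?s' \<or> signed_some sn j ?s"
    "n + t < 2 * card A \<Longrightarrow> ?T \<in> set (dlog ?s')"
    using on_bundle_accept[OF False jv, of t q] by (simp_all add: Let_def A_def)
  moreover have "X \<subseteq> A" using valid unfolding A_def accepted_signers_def by blast
  moreover have "signed_some sn j ?s \<Longrightarrow> signed_some sn j ?s'"
    using step_mono(1)[OF execution_step[OF ex, of r]] unfolding signed_some_def by blast
  ultimately show ?thesis
    unfolding delivered_def signed_some_def by auto
qed simp

lemma recv_bundle_signs:
  assumes ex: "execution sync n t d C acts cfs" and Cn: "C \<subseteq> {1..n}" and q: "q \<in> C" and j: "j \<in> C"
    and invoked: "(m,sn) \<in> invoked (loc (cfs k0) j)"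
    and recv: "acts r = Recv (p, q, Bundle m sn j (sig_set (m,sn,j) X), \<tau>) Ds" and "j \<in> X" "X \<subseteq> {1..n}"
  shows "(m,sn,j) \<in> signed (loc (cfs (Suc r)) q)"
proof -
  have "signed_some sn j (loc (cfs r) q) \<or> signed_some sn j (loc (cfs (Suc r)) q)"
    using recv_bundle[OF ex recv assms(7,8)]
      local_inv_delivered_signed[OF exec_inv_local[OF exec_inv_reachable[OF ex Cn] q]] by blast
  then have "signed_some sn j (loc (cfs (Suc r)) q)"
    using step_mono(1)[OF execution_step[OF ex, of r]] unfolding signed_some_def by blast
  then show ?thesis by (rule signed_some_invoked[OF ex Cn q j invoked])
qed

lemma recv_quorum_delivers:
  assumes ex: "execution sync n t d C acts cfs" and Cn: "C \<subseteq> {1..n}" and cC: "n - t \<le> card C"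
    and recv: "acts r = Recv (p, q', Bundle m sn j (sig_set (m,sn,j) X), \<tau>) Ds" and "q' \<in> C"
    and X: "j \<in> X" "X \<subseteq> {1..n}" "n + t < 2 * card X"
    and "q \<in> C" and "delivered (cfs k) q (m,sn,j)"
  shows "delivered (cfs (Suc r)) q' (m,sn,j)"
  using recv_bundle[OF ex recv X(1,2)]
proof
  assume "delivered_some sn j (loc (cfs r) q')"
  then obtain m' where "delivered (cfs r) q' (m',sn,j)"
    unfolding delivered_some_def delivered_def by blast
  moreover from this have "m' = m"
    using delivered_agree[OF ex Cn cC \<open>q' \<in> C\<close> \<open>q \<in> C\<close> _ assms(10)] by blast
  ultimately show ?thesis using delivered_mono[OF ex, of r "Suc r"] by simp
next
  let ?S = "saved (loc (cfs (Suc r)) q') (m,sn,j)"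
  assume "X \<subseteq> ?S \<and> signed_some sn j (loc (cfs (Suc r)) q') \<and>
    (n + t < 2 * card ?S \<longrightarrow> delivered (cfs (Suc r)) q' (m,sn,j))"
  moreover have "finite ?S"
    using finite_saved[OF exec_inv_local[OF exec_inv_reachable[OF ex Cn] \<open>q' \<in> C\<close>]] .
  ultimately show ?thesis using X(3) card_mono[of ?S X] by linarith
qed

lemma collect_quorum:
  assumes ex: "execution sync n t d C acts cfs" and Cn: "C \<subseteq> {1..n}" and q: "q \<in> C"
    and recv: "\<forall>b\<in>A. \<exists>X \<tau> Ds. acts (r b) = Recv (b, q, Bundle m sn j (sig_set (m,sn,j) X), \<tau>) Ds \<and>
                  b \<in> X \<and> j \<in> X \<and> X \<subseteq> {1..n}"
    and big: "n + t < 2 * card A"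
  shows "\<exists>b\<in>A. delivered_some sn j (loc (cfs (Suc (r b))) q)"
proof -
  let ?T = "(m,sn,j)"
  have A: "finite A" "A \<noteq> {}" using big card.infinite by fastforce+
  define R where "R = Max (r ` A)"
  have "R \<in> r ` A" unfolding R_def using A by (intro Max_in) auto
  then obtain b0 where b0: "b0 \<in> A" "r b0 = R" by (metis imageE)
  txt \<open>The bundle received last finds the signers of all earlier ones already saved.\<close>
  show ?thesis
  proof (cases "delivered_some sn j (loc (cfs R) q)")
    case True
    then show ?thesis using b0 delivered_some_mono[OF ex, of R "Suc R"] by auto
  next
    case False
    have sender: "b = b0" if bA: "b \<in> A" and rb: "r b = R" for b
    proof -
      obtain X \<tau> Ds where "acts (r b) = Recv (b, q, Bundle m sn j (sig_set ?T X), \<tau>) Ds"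
        using recv bA by blast
      moreover obtain X' \<tau>' Ds' where "acts (r b0) = Recv (b0, q, Bundle m sn j (sig_set ?T X'), \<tau>') Ds'"
        using recv b0(1) by blast
      ultimately show ?thesis using rb b0(2) by simp
    qed
    have "b \<in> saved (loc (cfs R) q) ?T" if b: "b \<in> A - {b0}" for b
    proof -
      have "r b \<le> R" using A(1) b unfolding R_def by simp
      then have lt: "r b < R" using sender b by fastforce
      obtain X \<tau> Ds where "acts (r b) = Recv (b, q, Bundle m sn j (sig_set ?T X), \<tau>) Ds"
        and X: "b \<in> X" "j \<in> X" "X \<subseteq> {1..n}" using recv b by blast
      from recv_bundle[OF ex this(1) X(2,3)] X(1) show ?thesis
        using False delivered_some_mono[OF ex, of "r b" R] saved_grows[OF ex, of "Suc (r b)" R q ?T] lt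
        by auto
    qed
    moreover obtain X \<tau> Ds where "acts R = Recv (b0, q, Bundle m sn j (sig_set ?T X), \<tau>) Ds"
      and X: "b0 \<in> X" "j \<in> X" "X \<subseteq> {1..n}" using recv b0 by metis
    note R = recv_bundle[OF ex this(1) X(2,3)]
    ultimately have "A \<subseteq> saved (loc (cfs (Suc R)) q) ?T"
      using False X(1) saved_grows[OF ex, of R "Suc R" q ?T] by auto
    then have "card A \<le> card (saved (loc (cfs (Suc R)) q) ?T)"
      by (rule card_mono[OF finite_saved[OF exec_inv_local[OF exec_inv_reachable[OF ex Cn] q]]])
    then have "delivered (cfs (Suc R)) q ?T"
      using R False big by simp
    then show ?thesis
      using b0 unfolding delivered_def delivered_some_def by auto
  qed
qed

lemma quorum_receptions_deliver:
  assumes ex: "execution sync n t d C acts cfs" and Cn: "C \<subseteq> {1..n}" and q: "q \<in> C"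
    and recv: "\<forall>b\<in>A. \<exists>r X \<tau> Ds. P r \<and> acts r = Recv (b, q, Bundle m sn j (sig_set (m,sn,j) X), \<tau>) Ds \<and>
                  b \<in> X \<and> j \<in> X \<and> X \<subseteq> {1..n}"
    and quorum: "n + t < 2 * card A"
  shows "\<exists>r. P r \<and> delivered_some sn j (loc (cfs (Suc r)) q)"
proof -
  from bchoice[OF recv] obtain r where r: "\<forall>b\<in>A. P (r b) \<and> (\<exists>X \<tau> Ds.
      acts (r b) = Recv (b, q, Bundle m sn j (sig_set (m,sn,j) X), \<tau>) Ds \<and> b \<in> X \<and> j \<in> X \<and> X \<subseteq> {1..n})"
    by blast
  then have "\<forall>b\<in>A. \<exists>X \<tau> Ds. acts (r b) = Recv (b, q, Bundle m sn j (sig_set (m,sn,j) X), \<tau>) Ds \<and>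
                  b \<in> X \<and> j \<in> X \<and> X \<subseteq> {1..n}" by blast
  from collect_quorum[OF ex Cn q this quorum] obtain b where "b \<in> A"
    "delivered_some sn j (loc (cfs (Suc (r b))) q)" ..
  then show ?thesis using r by blast
qed

section \<open>Delivery under fairness\<close>

lemma bcast_received:
  assumes "fair C acts cfs" and "bcast_in_transit n d C (cfs k) q M \<tau>" and "C \<subseteq> {1..n}"
  shows "\<exists>D. D \<subseteq> C \<and> card D \<le> d \<and> (\<forall>q'\<in>C - D. \<exists>r Ds. acts r = Recv (q, q', M, \<tau>) Ds)"
proof -
  obtain D where D: "D \<subseteq> C" "card D \<le> d" "\<forall>q'\<in>{1..n} - D. (q, q', M, \<tau>) \<in># net (cfs k)"
    using assms(2) unfolding bcast_in_transit_def by blast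
  have "\<exists>r Ds. acts r = Recv (q, q', M, \<tau>) Ds" if "q' \<in> C - D" for q'
  proof -
    have "(q, q', M, \<tau>) \<in># net (cfs k) \<and> cp_dst (q, q', M, \<tau>) \<in> C"
      using D(3) that assms(3) by auto
    then show ?thesis using assms(1) unfolding fair_def by blast
  qed
  then show ?thesis using D(1,2) by blast
qed

theorem global_delivery:
  assumes ex: "execution sync n t d C acts cfs" and fair: "fair C acts cfs"
    and Cn: "C \<subseteq> {1..n}" and cC: "n - t \<le> card C"
    and "q \<in> C" and "delivered (cfs k) q (m,sn,j)"
  shows "\<exists>k'. card C - d \<le> card {q' \<in> C. delivered (cfs k') q' (m,sn,j)}"
proof -
  have "\<not> delivered (cfs 0) q (m,sn,j)"
    using execution_init[OF ex] unfolding delivered_def init_lstate_def by simp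
  then obtain s where "\<not> delivered (cfs s) q (m,sn,j)" "delivered (cfs (Suc s)) q (m,sn,j)"
    using assms(6) by (rule first_transition)
  from deliver_broadcast[OF ex Cn this] obtain X where X: "j \<in> X" "X \<subseteq> {1..n}" "n + t < 2 * card X"
    and sent: "bcast_in_transit n d C (cfs (Suc s)) q (Bundle m sn j (sig_set (m,sn,j) X)) (clock (cfs s))"
    by blast
  obtain D where D: "D \<subseteq> C" "card D \<le> d"
    and recv: "\<forall>q'\<in>C - D. \<exists>r Ds. acts r = Recv (q, q', Bundle m sn j (sig_set (m,sn,j) X), clock (cfs s)) Ds"
    using bcast_received[OF fair sent Cn] by blast
  have "\<exists>K. \<forall>q'\<in>C - D. delivered (cfs K) q' (m,sn,j)"
  proof (rule ex_common_bound)
    show "finite (C - D)" using finite_subset[OF Cn] by simp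
    show "\<forall>q'\<in>C - D. \<exists>r. delivered (cfs r) q' (m,sn,j)"
      using recv recv_quorum_delivers[OF ex Cn cC _ _ X assms(5,6)] by blast
  qed (rule delivered_mono[OF ex])
  then obtain K where "\<forall>q'\<in>C - D. delivered (cfs K) q' (m,sn,j)" ..
  then have "card (C - D) \<le> card {q' \<in> C. delivered (cfs K) q' (m,sn,j)}"
    using finite_subset[OF Cn] by (intro card_mono) auto
  then show ?thesis
    using card_Diff_bounded[OF finite_subset[OF Cn] D] le_trans by blast
qed

lemma signed_bundle_received:
  assumes ex: "execution sync n t d C acts cfs" and fair: "fair C acts cfs" and Cn: "C \<subseteq> {1..n}"
    and "(m,sn,j) \<in> signed (loc (cfs k) b)"
  shows "\<exists>X D. X \<subseteq> {1..n} \<and> b \<in> X \<and> j \<in> X \<and> D \<subseteq> C \<and> card D \<le> d \<and>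
           (\<forall>q\<in>C - D. \<exists>r \<tau> Ds. acts r = Recv (b, q, Bundle m sn j (sig_set (m,sn,j) X), \<tau>) Ds)"
proof -
  have "(m,sn,j) \<notin> signed (loc (cfs 0) b)" using execution_init[OF ex] by (simp add: init_lstate_def)
  then obtain s where "(m,sn,j) \<notin> signed (loc (cfs s) b)" "(m,sn,j) \<in> signed (loc (cfs (Suc s)) b)"
    using assms(4) by (rule first_transition)
  from sign_broadcast[OF ex Cn this] obtain X where X: "X \<subseteq> {1..n}" "b \<in> X" "j \<in> X"
    and sent: "bcast_in_transit n d C (cfs (Suc s)) b (Bundle m sn j (sig_set (m,sn,j) X)) (clock (cfs s))"
    by blast
  from bcast_received[OF fair sent Cn] obtain D where "D \<subseteq> C" "card D \<le> d"
    "\<forall>q\<in>C - D. \<exists>r Ds. acts r = Recv (b, q, Bundle m sn j (sig_set (m,sn,j) X), clock (cfs s)) Ds"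
    by blast
  with X show ?thesis by (intro exI[of _ X] exI[of _ D]) blast
qed

lemma correct_signers_closed:
  assumes ex: "execution sync n t d C acts cfs" and fair: "fair C acts cfs" and Cn: "C \<subseteq> {1..n}"
    and invoke: "acts k0 = Invoke i m sn Ds0"
    and S: "S = {b \<in> C. \<exists>k. (m,sn,i) \<in> signed (loc (cfs k) b)}"
  obtains X D where
    "\<And>b. b \<in> S \<Longrightarrow> X b \<subseteq> {1..n} \<and> b \<in> X b \<and> i \<in> X b \<and> D b \<subseteq> C \<and> card (D b) \<le> d \<and> C - D b \<subseteq> S"
    "\<And>b q. b \<in> S \<Longrightarrow> q \<in> C - D b \<Longrightarrow>
       \<exists>r \<tau> Ds. acts r = Recv (b, q, Bundle m sn i (sig_set (m,sn,i) (X b)), \<tau>) Ds"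
proof -
  let ?T = "(m,sn,i)"
  note i = invoke_effect[OF ex invoke]
  have "\<exists>X D. X \<subseteq> {1..n} \<and> b \<in> X \<and> i \<in> X \<and> D \<subseteq> C \<and> card D \<le> d \<and>
           (\<forall>q\<in>C - D. \<exists>r \<tau> Ds. acts r = Recv (b, q, Bundle m sn i (sig_set ?T X), \<tau>) Ds)"
    if bS: "b \<in> S" for b
  proof -
    obtain k where "?T \<in> signed (loc (cfs k) b)" using bS unfolding S by blast
    from signed_bundle_received[OF ex fair Cn this] show ?thesis .
  qed
  then obtain X D where X: "\<And>b. b \<in> S \<Longrightarrow> X b \<subseteq> {1..n} \<and> b \<in> X b \<and> i \<in> X b"
    and D: "\<And>b. b \<in> S \<Longrightarrow> D b \<subseteq> C \<and> card (D b) \<le> d"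
    and recv: "\<And>b q. b \<in> S \<Longrightarrow> q \<in> C - D b \<Longrightarrow>
                 \<exists>r \<tau> Ds. acts r = Recv (b, q, Bundle m sn i (sig_set ?T (X b)), \<tau>) Ds"
    by metis
  have closed: "C - D b \<subseteq> S" if b: "b \<in> S" for b
  proof
    fix q assume q: "q \<in> C - D b"
    then obtain r \<tau> Ds where "acts r = Recv (b, q, Bundle m sn i (sig_set ?T (X b)), \<tau>) Ds"
      using recv b by blast
    with X[OF b] q recv_bundle_signs[OF ex Cn _ i(1,2)] show "q \<in> S"
      unfolding S by blast
  qed
  show thesis
  proof (rule that)
    show "X b \<subseteq> {1..n} \<and> b \<in> X b \<and> i \<in> X b \<and> D b \<subseteq> C \<and> card (D b) \<le> d \<and> C - D b \<subseteq> S"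
      if "b \<in> S" for b
      using X[OF that] D[OF that] closed[OF that] by blast
  qed (rule recv)
qed

theorem local_delivery:
  assumes ex: "execution sync n t d C acts cfs" and fair: "fair C acts cfs" and Cn: "C \<subseteq> {1..n}"
    and cC: "n - t \<le> card C" and resil: "3 * t + 2 * d < n" and invoke: "acts k0 = Invoke i m sn Ds0"
  shows "\<exists>k q. q \<in> C \<and> delivered (cfs k) q (m,sn,i)"
proof (rule ccontr)
  assume none: "\<not> ?thesis"
  note i = invoke_effect[OF ex invoke]
  define S where "S = {b \<in> C. \<exists>k. (m,sn,i) \<in> signed (loc (cfs k) b)}"
  have finS: "finite S" using finite_subset[OF _ finite_subset[OF Cn]] unfolding S_def by auto
  have "i \<in> S" using i unfolding S_def by blast
  obtain X D where XD: "\<And>b. b \<in> S \<Longrightarrow> X b \<subseteq> {1..n} \<and> b \<in> X b \<and> i \<in> X b \<and> D b \<subseteq> C \<and> card (D b) \<le> d \<and> C - D b \<subseteq> S"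
    and recv: "\<And>b q. b \<in> S \<Longrightarrow> q \<in> C - D b \<Longrightarrow>
       \<exists>r \<tau> Ds. acts r = Recv (b, q, Bundle m sn i (sig_set (m,sn,i) (X b)), \<tau>) Ds"
    using correct_signers_closed[OF ex fair Cn invoke S_def] by blast
  have "card C - d \<le> card (S \<inter> (C - D b))" if "b \<in> S" for b
    using card_Diff_bounded[OF finite_subset[OF Cn]] XD[OF that] by (simp add: Int_absorb1)
  then obtain q where q: "q \<in> S" and "card S * (card C - d) \<le> card S * card {b\<in>S. q \<in> C - D b}"
    using double_counting[OF finS finS, of "card C - d" "\<lambda>b. C - D b"] \<open>i \<in> S\<close> by blast
  then have "card C - d \<le> card {b\<in>S. q \<in> C - D b}"
    using \<open>i \<in> S\<close> finS by (auto simp: card_gt_0_iff)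
  then have quorum: "n + t < 2 * card {b\<in>S. q \<in> C - D b}"
    using quorum_of_correct[OF cC resil] by linarith
  have qC: "q \<in> C" using q unfolding S_def by blast
  have "\<forall>b\<in>{b\<in>S. q \<in> C - D b}. \<exists>r X' \<tau> Ds. True \<and>
          acts r = Recv (b, q, Bundle m sn i (sig_set (m,sn,i) X'), \<tau>) Ds \<and> b \<in> X' \<and> i \<in> X' \<and> X' \<subseteq> {1..n}"
  proof
    fix b assume b: "b \<in> {b\<in>S. q \<in> C - D b}"
    then obtain r \<tau> Ds where "acts r = Recv (b, q, Bundle m sn i (sig_set (m,sn,i) (X b)), \<tau>) Ds"
      using recv by blast
    with XD[of b] b show "\<exists>r X' \<tau> Ds. True \<and> acts r = Recv (b, q, Bundle m sn i (sig_set (m,sn,i) X'), \<tau>) Ds \<and>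
        b \<in> X' \<and> i \<in> X' \<and> X' \<subseteq> {1..n}" by blast
  qed
  from quorum_receptions_deliver[OF ex Cn qC this quorum] show False
    using none delivered_some_invoked[OF ex Cn qC i(1,2)] qC by blast
qed

section \<open>Latency of synchronous executions\<close>

lemma step_clock:
  assumes "step sync n t d C a cf cf'"
  shows "clock cf' = (if a = Tick then Suc (clock cf) else clock cf)"
proof (cases a)
  case (Invoke i m sn Ds)
  then show ?thesis using step_InvokeD(4)[OF assms[unfolded Invoke]] by simp
next
  case (Recv cp Ds)
  obtain m sn j sigs where "cp_msg cp = Bundle m sn j sigs" by (cases "cp_msg cp")
  then show ?thesis using step_RecvD(5)[OF assms[unfolded Recv]] Recv by simp
qed (use assms in \<open>auto simp: step_def\<close>)

lemma step_net_new:
  assumes "step sync n t d C a cf cf'" and "cp \<in># net cf'"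
  shows "cp \<in># net cf \<or> cp_time cp = clock cf"
proof (cases a)
  case (Invoke i m sn Ds)
  then have "cp \<in># net cf \<or> cp \<in># all_copies n i (clock cf) (snd (on_invoke i m sn (loc cf i))) Ds"
    using step_InvokeD(4)[OF assms(1)[unfolded Invoke]] assms(2) by simp
  then show ?thesis by (auto dest: all_copies_mem)
next
  case (Recv cp' Ds)
  obtain m sn j sigs where "cp_msg cp' = Bundle m sn j sigs" by (cases "cp_msg cp'")
  then have "cp \<in># net cf - {#cp'#} \<or>
      cp \<in># all_copies n (cp_dst cp') (clock cf) (snd (on_bundle n t (cp_dst cp') m sn j sigs (loc cf (cp_dst cp')))) Ds"
    using step_RecvD(5)[OF assms(1)[unfolded Recv]] assms(2) by simp
  then show ?thesis by (auto dest: in_diffD all_copies_mem)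
qed (use assms in \<open>auto simp: step_def dest: in_diffD\<close>)

lemma step_net_keep:
  assumes "step sync n t d C a cf cf'" and "cp \<in># net cf"
    and "\<forall>Ds. a \<noteq> Recv cp Ds" and "a \<noteq> ByzRecv cp"
  shows "cp \<in># net cf'"
proof (cases a)
  case (Invoke i m sn Ds)
  then show ?thesis using step_InvokeD(4)[OF assms(1)[unfolded Invoke]] assms(2) by simp
next
  case (Recv cp' Ds)
  obtain m sn j sigs where "cp_msg cp' = Bundle m sn j sigs" by (cases "cp_msg cp'")
  then show ?thesis
    using step_RecvD(5)[OF assms(1)[unfolded Recv]] assms(2,3) Recv by (simp add: in_diff_count)
qed (use assms in \<open>auto simp: step_def in_diff_count\<close>)

lemma clock_mono:
  assumes ex: "execution sync n t d C acts cfs"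
  shows "k \<le> k' \<Longrightarrow> clock (cfs k) \<le> clock (cfs k')"
  by (induction k' rule: dec_induct) (use step_clock[OF execution_step[OF ex]] in \<open>auto simp: le_Suc_eq\<close>)

lemma sync_copies_recent:
  assumes ex: "execution True n t d C acts cfs"
  shows "cp \<in># net (cfs k) \<Longrightarrow> clock (cfs k) \<le> Suc (cp_time cp)"
proof (induction k arbitrary: cp)
  case 0
  then show ?case using ex unfolding execution_def init_config_def by simp
next
  case (Suc k)
  note st = execution_step[OF ex, of k]
  show ?case
  proof (cases "acts k = Tick")
    case True
    then show ?thesis
      using st Suc.prems step_clock[OF st] unfolding step_def by auto
  next
    case False
    from step_net_new[OF st Suc.prems] show ?thesis
    proof
      assume "cp \<in># net (cfs k)"
      then show ?thesis using Suc.IH step_clock[OF st] False by simp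
    qed (use step_clock[OF st] False in simp)
  qed
qed

lemma net_persists:
  assumes ex: "execution sync n t d C acts cfs" and "cp \<in># net (cfs k1)" and "k1 \<le> k"
    and "\<forall>r. k1 \<le> r \<and> r < k \<longrightarrow> (\<forall>Ds. acts r \<noteq> Recv cp Ds) \<and> acts r \<noteq> ByzRecv cp"
  shows "cp \<in># net (cfs k)"
  using assms(3,4)
proof (induction k rule: dec_induct)
  case (step k)
  then show ?case using step_net_keep[OF execution_step[OF ex, of k]] by simp
qed (use assms(2) in simp)

lemma sync_recv:
  assumes ex: "execution True n t d C acts cfs" and cp: "cp \<in># net (cfs k1)" and dst: "cp_dst cp \<in> C"
    and late: "cp_time cp + 2 \<le> clock (cfs k)"
  shows "\<exists>r Ds. r < k \<and> acts r = Recv cp Ds \<and> clock (cfs r) \<le> Suc (cp_time cp)"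
proof -
  have "k1 \<le> k"
    using clock_mono[OF ex, of k k1] sync_copies_recent[OF ex cp] late by linarith
  moreover have "cp \<notin># net (cfs k)"
    using sync_copies_recent[OF ex] late by fastforce
  ultimately obtain r where r: "r < k" "(\<exists>Ds. acts r = Recv cp Ds) \<or> acts r = ByzRecv cp"
    using net_persists[OF ex cp] by blast
  note st = execution_step[OF ex, of r]
  have "acts r \<noteq> ByzRecv cp" using st dst unfolding step_def by auto
  then obtain Ds where recv: "acts r = Recv cp Ds" using r(2) by blast
  obtain m sn j sigs where "cp_msg cp = Bundle m sn j sigs" by (cases "cp_msg cp")
  from step_RecvD(1)[OF st[unfolded recv] this] have "clock (cfs r) \<le> Suc (cp_time cp)"
    by (rule sync_copies_recent[OF ex])
  then show ?thesis using r(1) recv by blast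
qed

lemma bcast_received_sync:
  assumes ex: "execution True n t d C acts cfs" and Cn: "C \<subseteq> {1..n}"
    and sent: "bcast_in_transit n d C (cfs k1) q M \<tau>" and late: "\<tau> + 2 \<le> clock (cfs k)"
  shows "\<exists>D. D \<subseteq> C \<and> card D \<le> d \<and>
           (\<forall>q'\<in>C - D. \<exists>r Ds. r < k \<and> clock (cfs r) \<le> Suc \<tau> \<and> acts r = Recv (q, q', M, \<tau>) Ds)"
proof -
  obtain D where D: "D \<subseteq> C" "card D \<le> d" "\<forall>q'\<in>{1..n} - D. (q, q', M, \<tau>) \<in># net (cfs k1)"
    using sent unfolding bcast_in_transit_def by blast
  have "\<exists>r Ds. r < k \<and> clock (cfs r) \<le> Suc \<tau> \<and> acts r = Recv (q, q', M, \<tau>) Ds" if q': "q' \<in> C - D" for q'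
  proof -
    have "(q, q', M, \<tau>) \<in># net (cfs k1)" using D(3) q' Cn by blast
    moreover have "cp_dst (q, q', M, \<tau>) \<in> C" "cp_time (q, q', M, \<tau>) + 2 \<le> clock (cfs k)"
      using q' late by simp_all
    ultimately show ?thesis using sync_recv[OF ex] by fastforce
  qed
  then show ?thesis using D(1,2) by blast
qed

lemma signed_bundle_received_sync:
  assumes ex: "execution True n t d C acts cfs" and Cn: "C \<subseteq> {1..n}"
    and signed: "(m,sn,j) \<in> signed (loc (cfs (Suc r)) b)"
    and early: "clock (cfs r) \<le> \<tau>" and late: "\<tau> + 2 \<le> clock (cfs k)"
  shows "\<exists>X D. X \<subseteq> {1..n} \<and> b \<in> X \<and> j \<in> X \<and> D \<subseteq> C \<and> card D \<le> d \<and>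
           (\<forall>q\<in>C - D. \<exists>r' \<tau>' Ds. r' < k \<and> clock (cfs r') \<le> Suc \<tau> \<and>
              acts r' = Recv (b, q, Bundle m sn j (sig_set (m,sn,j) X), \<tau>') Ds)"
proof -
  have "(m,sn,j) \<notin> signed (loc (cfs 0) b)" using execution_init[OF ex] by (simp add: init_lstate_def)
  then obtain s where s: "s < Suc r" "(m,sn,j) \<notin> signed (loc (cfs s) b)" "(m,sn,j) \<in> signed (loc (cfs (Suc s)) b)"
    using signed by (rule first_transition)
  have early': "clock (cfs s) \<le> \<tau>" using clock_mono[OF ex, of s r] s(1) early by simp
  from sign_broadcast[OF ex Cn s(2,3)] obtain X where X: "X \<subseteq> {1..n}" "b \<in> X" "j \<in> X"
    and sent: "bcast_in_transit n d C (cfs (Suc s)) b (Bundle m sn j (sig_set (m,sn,j) X)) (clock (cfs s))"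
    by blast
  have "clock (cfs s) + 2 \<le> clock (cfs k)" using early' late by simp
  from bcast_received_sync[OF ex Cn sent this] obtain D where "D \<subseteq> C" "card D \<le> d"
    "\<forall>q\<in>C - D. \<exists>r' Ds. r' < k \<and> clock (cfs r') \<le> Suc (clock (cfs s)) \<and>
        acts r' = Recv (b, q, Bundle m sn j (sig_set (m,sn,j) X), clock (cfs s)) Ds"
    by blast
  with X early' show ?thesis by (intro exI[of _ X] exI[of _ D]) fastforce
qed

lemma second_round_bundles:
  assumes ex: "execution True n t d C acts cfs" and Cn: "C \<subseteq> {1..n}"
    and invoke: "acts k0 = Invoke i m sn Ds0" and late: "clock (cfs k0) + 3 \<le> clock (cfs k)"
  shows "\<exists>B X D. B \<subseteq> C \<and> card C - d \<le> card B \<and>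
     (\<forall>b\<in>B. X b \<subseteq> {1..n} \<and> b \<in> X b \<and> i \<in> X b \<and> D b \<subseteq> C \<and> card (D b) \<le> d \<and>
        (\<forall>q\<in>C - D b. \<exists>r \<tau> Ds. r < k \<and> clock (cfs r) \<le> clock (cfs k0) + 2 \<and>
              acts r = Recv (b, q, Bundle m sn i (sig_set (m,sn,i) (X b)), \<tau>) Ds))"
proof -
  let ?T = "(m,sn,i)" and ?\<tau> = "clock (cfs k0)"
  note i = invoke_effect[OF ex invoke]
  obtain X0 D0 where X0: "X0 \<subseteq> {1..n}" "i \<in> X0" and D0: "D0 \<subseteq> C" "card D0 \<le> d"
    and recv0: "\<forall>q\<in>C - D0. \<exists>r \<tau> Ds. r < k \<and> clock (cfs r) \<le> Suc ?\<tau> \<and>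
                  acts r = Recv (i, q, Bundle m sn i (sig_set ?T X0), \<tau>) Ds"
    using signed_bundle_received_sync[OF ex Cn i(3) order_refl, of k] late by auto
  have "\<exists>XD. fst XD \<subseteq> {1..n} \<and> b \<in> fst XD \<and> i \<in> fst XD \<and> snd XD \<subseteq> C \<and> card (snd XD) \<le> d \<and>
          (\<forall>q\<in>C - snd XD. \<exists>r \<tau> Ds. r < k \<and> clock (cfs r) \<le> ?\<tau> + 2 \<and>
              acts r = Recv (b, q, Bundle m sn i (sig_set ?T (fst XD)), \<tau>) Ds)"
    if b: "b \<in> C - D0" for b
  proof -
    obtain r \<tau> Ds where r: "clock (cfs r) \<le> Suc ?\<tau>" "acts r = Recv (i, b, Bundle m sn i (sig_set ?T X0), \<tau>) Ds"
      using recv0 b by blast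
    have "?T \<in> signed (loc (cfs (Suc r)) b)"
      using recv_bundle_signs[OF ex Cn _ i(1,2) r(2) X0(2,1)] b by blast
    from signed_bundle_received_sync[OF ex Cn this r(1), of k] late
    obtain X D where "X \<subseteq> {1..n} \<and> b \<in> X \<and> i \<in> X \<and> D \<subseteq> C \<and> card D \<le> d \<and>
           (\<forall>q\<in>C - D. \<exists>r' \<tau>' Ds. r' < k \<and> clock (cfs r') \<le> Suc (Suc ?\<tau>) \<and>
              acts r' = Recv (b, q, Bundle m sn i (sig_set ?T X), \<tau>') Ds)"
      by auto
    then show ?thesis by (intro exI[of _ "(X, D)"]) auto
  qed
  then have "\<forall>b\<in>C - D0. \<exists>XD. fst XD \<subseteq> {1..n} \<and> b \<in> fst XD \<and> i \<in> fst XD \<and> snd XD \<subseteq> C \<and>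
      card (snd XD) \<le> d \<and> (\<forall>q\<in>C - snd XD. \<exists>r \<tau> Ds. r < k \<and> clock (cfs r) \<le> ?\<tau> + 2 \<and>
              acts r = Recv (b, q, Bundle m sn i (sig_set ?T (fst XD)), \<tau>) Ds)" by blast
  from bchoice[OF this] obtain XD where "\<forall>b\<in>C - D0. fst (XD b) \<subseteq> {1..n} \<and> b \<in> fst (XD b) \<and> i \<in> fst (XD b) \<and>
      snd (XD b) \<subseteq> C \<and> card (snd (XD b)) \<le> d \<and> (\<forall>q\<in>C - snd (XD b). \<exists>r \<tau> Ds. r < k \<and> clock (cfs r) \<le> ?\<tau> + 2 \<and>
              acts r = Recv (b, q, Bundle m sn i (sig_set ?T (fst (XD b))), \<tau>) Ds)" ..
  moreover have "card C - d \<le> card (C - D0)"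
    using card_Diff_bounded[OF finite_subset[OF Cn finite_atLeastAtMost] D0] .
  ultimately show ?thesis
    by (intro exI[of _ "C - D0"] exI[of _ "fst \<circ> XD"] exI[of _ "snd \<circ> XD"]) auto
qed

theorem two_step_delivery:
  assumes ex: "execution True n t d C acts cfs" and Cn: "C \<subseteq> {1..n}" and cC: "n - t \<le> card C"
    and resil: "3 * t + 2 * d < n" and invoke: "acts k0 = Invoke i m sn Ds0" and d0: "d = 0"
    and late: "clock (cfs k0) + 2 < clock (cfs k)"
  shows "card C - d \<le> card {q \<in> C. delivered (cfs k) q (m,sn,i)}"
proof -
  have late3: "clock (cfs k0) + 3 \<le> clock (cfs k)" using late by simp
  obtain B X D where B: "B \<subseteq> C" "card C - d \<le> card B"
    and XD: "\<forall>b\<in>B. X b \<subseteq> {1..n} \<and> b \<in> X b \<and> i \<in> X b \<and> D b \<subseteq> C \<and> card (D b) \<le> d \<and>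
        (\<forall>q\<in>C - D b. \<exists>r \<tau> Ds. r < k \<and> clock (cfs r) \<le> clock (cfs k0) + 2 \<and>
              acts r = Recv (b, q, Bundle m sn i (sig_set (m,sn,i) (X b)), \<tau>) Ds)"
    using second_round_bundles[OF ex Cn invoke late3] by blast
  have no_loss: "D b = {}" if "b \<in> B" for b
    using XD that d0 finite_subset[OF _ finite_subset[OF Cn finite_atLeastAtMost]] by (meson card_0_eq le_zero_eq)
  have quorum: "n + t < 2 * card B" using quorum_of_correct[OF cC resil] B(2) by linarith
  have "delivered (cfs k) q (m,sn,i)" if q: "q \<in> C" for q
  proof -
    have "\<forall>b\<in>B. \<exists>r X' \<tau> Ds. r < k \<and> acts r = Recv (b, q, Bundle m sn i (sig_set (m,sn,i) X'), \<tau>) Ds \<and>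
            b \<in> X' \<and> i \<in> X' \<and> X' \<subseteq> {1..n}"
    proof
      fix b assume b: "b \<in> B"
      then obtain r \<tau> Ds where "r < k" "acts r = Recv (b, q, Bundle m sn i (sig_set (m,sn,i) (X b)), \<tau>) Ds"
        using XD no_loss q by blast
      with XD b show "\<exists>r X' \<tau> Ds. r < k \<and> acts r = Recv (b, q, Bundle m sn i (sig_set (m,sn,i) X'), \<tau>) Ds \<and>
          b \<in> X' \<and> i \<in> X' \<and> X' \<subseteq> {1..n}" by blast
    qed
    from quorum_receptions_deliver[OF ex Cn q this quorum] obtain s where
      "s < k" "delivered_some sn i (loc (cfs (Suc s)) q)" by blast
    then have "delivered_some sn i (loc (cfs k) q)" using delivered_some_mono[OF ex, of "Suc s" k] by simp
    then show ?thesis using delivered_some_invoked[OF ex Cn q invoke_effect(1,2)[OF ex invoke]] by blast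
  qed
  then have "{q \<in> C. delivered (cfs k) q (m,sn,i)} = C" by blast
  then show ?thesis by simp
qed

lemma sync_delivery_spreads:
  assumes ex: "execution True n t d C acts cfs" and Cn: "C \<subseteq> {1..n}" and cC: "n - t \<le> card C"
    and q: "q \<in> C" and dl: "delivered (cfs (Suc r)) q (m,sn,j)" and late: "clock (cfs r) + 2 \<le> clock (cfs k)"
  shows "card C - d \<le> card {q' \<in> C. delivered (cfs k) q' (m,sn,j)}"
proof -
  let ?T = "(m,sn,j)"
  have finC: "finite C" using finite_subset[OF Cn finite_atLeastAtMost] .
  have "\<not> delivered (cfs 0) q ?T"
    using execution_init[OF ex] unfolding delivered_def init_lstate_def by simp
  then obtain s where s: "s < Suc r" "\<not> delivered (cfs s) q ?T" "delivered (cfs (Suc s)) q ?T"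
    using dl by (rule first_transition)
  have early: "clock (cfs s) + 2 \<le> clock (cfs k)"
    using clock_mono[OF ex, of s r] s(1) late by simp
  from deliver_broadcast[OF ex Cn s(2,3)] obtain Y where Y: "j \<in> Y" "Y \<subseteq> {1..n}" "n + t < 2 * card Y"
    and sent: "bcast_in_transit n d C (cfs (Suc s)) q (Bundle m sn j (sig_set ?T Y)) (clock (cfs s))"
    by blast
  from bcast_received_sync[OF ex Cn sent early] obtain D where D: "D \<subseteq> C" "card D \<le> d"
    and recv: "\<forall>q'\<in>C - D. \<exists>r Ds. r < k \<and> clock (cfs r) \<le> Suc (clock (cfs s)) \<and>
                 acts r = Recv (q, q', Bundle m sn j (sig_set ?T Y), clock (cfs s)) Ds"
    by blast
  have "delivered (cfs k) q' ?T" if q': "q' \<in> C - D" for q'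
  proof -
    obtain r' Ds where "r' < k" "acts r' = Recv (q, q', Bundle m sn j (sig_set ?T Y), clock (cfs s)) Ds"
      using recv q' by blast
    with recv_quorum_delivers[OF ex Cn cC this(2) _ Y q s(3)] q' delivered_mono[OF ex, of "Suc r'" k]
    show ?thesis by simp
  qed
  then have "card (C - D) \<le> card {q' \<in> C. delivered (cfs k) q' ?T}"
    using finC by (intro card_mono) auto
  then show ?thesis using card_Diff_bounded[OF finC D] by linarith
qed

theorem three_step_delivery:
  assumes ex: "execution True n t d C acts cfs" and Cn: "C \<subseteq> {1..n}" and cC: "n - t \<le> card C"
    and invoke: "acts k0 = Invoke i m sn Ds0"
    and quorum: "card C * (n + t) < 2 * ((card C - d) * (card C - d))"
    and late: "clock (cfs k0) + 3 < clock (cfs k)"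
  shows "card C - d \<le> card {q \<in> C. delivered (cfs k) q (m,sn,i)}"
proof -
  let ?T = "(m,sn,i)" and ?c = "card C"
  have finC: "finite C" using finite_subset[OF Cn finite_atLeastAtMost] .
  have late3: "clock (cfs k0) + 3 \<le> clock (cfs k)" using late by simp
  obtain B X D where B: "B \<subseteq> C" "?c - d \<le> card B"
    and XD: "\<forall>b\<in>B. X b \<subseteq> {1..n} \<and> b \<in> X b \<and> i \<in> X b \<and> D b \<subseteq> C \<and> card (D b) \<le> d \<and>
        (\<forall>q\<in>C - D b. \<exists>r \<tau> Ds. r < k \<and> clock (cfs r) \<le> clock (cfs k0) + 2 \<and>
              acts r = Recv (b, q, Bundle m sn i (sig_set ?T (X b)), \<tau>) Ds)"
    using second_round_bundles[OF ex Cn invoke late3] by blast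
  have "?c - d \<le> card (C \<inter> (C - D b))" if "b \<in> B" for b
    using card_Diff_bounded[OF finC, of "D b" d] XD that by (simp add: Int_absorb1)
  then obtain q where q: "q \<in> C" and count: "card B * (?c - d) \<le> ?c * card {b\<in>B. q \<in> C - D b}"
    using double_counting[OF finC finite_subset[OF B(1) finC], of "?c - d" "\<lambda>b. C - D b"] quorum by fastforce
  have "(?c - d) * (?c - d) \<le> card B * (?c - d)" using B(2) by (rule mult_le_mono1)
  then have "(?c - d) * (?c - d) \<le> ?c * card {b\<in>B. q \<in> C - D b}" using count by (rule le_trans)
  then have "?c * (n + t) < ?c * (2 * card {b\<in>B. q \<in> C - D b})"
    using quorum by linarith
  then have quorum_q: "n + t < 2 * card {b\<in>B. q \<in> C - D b}" by (rule mult_left_less_imp_less) simp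
  have "\<forall>b\<in>{b\<in>B. q \<in> C - D b}. \<exists>r X' \<tau> Ds. clock (cfs r) \<le> clock (cfs k0) + 2 \<and>
          acts r = Recv (b, q, Bundle m sn i (sig_set ?T X'), \<tau>) Ds \<and> b \<in> X' \<and> i \<in> X' \<and> X' \<subseteq> {1..n}"
  proof
    fix b assume b: "b \<in> {b\<in>B. q \<in> C - D b}"
    then obtain r \<tau> Ds where "clock (cfs r) \<le> clock (cfs k0) + 2"
      "acts r = Recv (b, q, Bundle m sn i (sig_set ?T (X b)), \<tau>) Ds"
      using XD by blast
    with XD b show "\<exists>r X' \<tau> Ds. clock (cfs r) \<le> clock (cfs k0) + 2 \<and>
        acts r = Recv (b, q, Bundle m sn i (sig_set ?T X'), \<tau>) Ds \<and> b \<in> X' \<and> i \<in> X' \<and> X' \<subseteq> {1..n}"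
      by blast
  qed
  from quorum_receptions_deliver[OF ex Cn q this quorum_q] obtain s where
    s: "clock (cfs s) \<le> clock (cfs k0) + 2" "delivered_some sn i (loc (cfs (Suc s)) q)"
    by blast
  then have "delivered (cfs (Suc s)) q ?T"
    using delivered_some_invoked[OF ex Cn q invoke_effect(1,2)[OF ex invoke]] by blast
  moreover have "clock (cfs s) + 2 \<le> clock (cfs k)" using s(1) late by simp
  ultimately show ?thesis by (rule sync_delivery_spreads[OF ex Cn cC q])
qed

section \<open>Message complexity and the main theorem\<close>

theorem message_complexity:
  assumes ex: "execution sync n t d C acts cfs" and Cn: "C \<subseteq> {1..n}"
  shows "n * (\<Sum>q\<in>C. length (filter (\<lambda>M. msg_key M = (sn, j)) (bclog (loc (cfs k) q)))) \<le> 2 * n ^ 2"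
proof -
  have "length (filter (\<lambda>M. msg_key M = (sn, j)) (bclog (loc (cfs k) q))) \<le> 2" if "q \<in> C" for q
    using bclog_bounded_le_two[OF exec_inv_bclog[OF exec_inv_reachable[OF ex Cn] that]] .
  then have "(\<Sum>q\<in>C. length (filter (\<lambda>M. msg_key M = (sn, j)) (bclog (loc (cfs k) q)))) \<le> (\<Sum>q\<in>C. 2)"
    by (rule sum_mono)
  also have "\<dots> \<le> 2 * n" using card_mono[OF finite_atLeastAtMost Cn] by simp
  finally show ?thesis by (simp add: power2_eq_square)
qed

theorem theorem1:
  fixes n t d :: nat and C :: "nat set"
  assumes C_procs: "C \<subseteq> {1..n}"
      and at_most_t_byz: "n - t \<le> card C"
      and d_lt_c: "d < card C"
      and resil: "n > 3 * t + 2 * d"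
  shows
    \<comment> \<open>MBRB-Validity\<close>
    "(\<forall>(acts :: nat \<Rightarrow> 'm action) cfs k q m sn j.
        execution False n t d C acts cfs \<and> q \<in> C \<and> j \<in> C \<and> delivered (cfs k) q (m, sn, j)
        \<longrightarrow> (m, sn) \<in> invoked (loc (cfs k) j))
   \<comment> \<open>MBRB-No-duplication\<close>
   \<and> (\<forall>(acts :: nat \<Rightarrow> 'm action) cfs k q sn j.
        execution False n t d C acts cfs \<and> q \<in> C
        \<longrightarrow> length (filter (\<lambda>(m', sn', j'). sn' = sn \<and> j' = j) (dlog (loc (cfs k) q))) \<le> 1)
   \<comment> \<open>MBRB-No-duplicity\<close>
   \<and> (\<forall>(acts :: nat \<Rightarrow> 'm action) cfs k1 k2 q1 q2 m1 m2 sn j.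
        execution False n t d C acts cfs \<and> q1 \<in> C \<and> q2 \<in> C \<and>
        delivered (cfs k1) q1 (m1, sn, j) \<and> delivered (cfs k2) q2 (m2, sn, j)
        \<longrightarrow> m1 = m2)
   \<comment> \<open>MBRB-Local-delivery\<close>
   \<and> (\<forall>(acts :: nat \<Rightarrow> 'm action) cfs k i m sn Ds.
        execution False n t d C acts cfs \<and> fair C acts cfs \<and> i \<in> C \<and> acts k = Invoke i m sn Ds
        \<longrightarrow> (\<exists>k' q. q \<in> C \<and> delivered (cfs k') q (m, sn, i)))
   \<comment> \<open>MBRB-Global-delivery with l = c - d\<close>
   \<and> (\<forall>(acts :: nat \<Rightarrow> 'm action) cfs k q m sn j.
        execution False n t d C acts cfs \<and> fair C acts cfs \<and> q \<in> C \<and> delivered (cfs k) q (m, sn, j)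
        \<longrightarrow> (\<exists>k'. card C - d \<le> card {q' \<in> C. delivered (cfs k') q' (m, sn, j)}))
   \<comment> \<open>Latency: with all transfer delays equal to one communication step\<close>
   \<and> (\<forall>(acts :: nat \<Rightarrow> 'm action) cfs k0 i m sn Ds.
        execution True n t d C acts cfs \<and> fair C acts cfs \<and> time_progresses acts \<and>
        i \<in> C \<and> acts k0 = Invoke i m sn Ds
        \<longrightarrow> (real d < (real (card C) - of_int \<lfloor>(real n + real t) / 2\<rfloor>)
                        / (of_int \<lfloor>(real n + real t) / 2\<rfloor> + 1)
              \<longrightarrow> (\<forall>k. clock (cfs k) > clock (cfs k0) + 2
                     \<longrightarrow> card C - d \<le> card {q \<in> C. delivered (cfs k) q (m, sn, i)}))
          \<and> (real d < real (card C) - sqrt (real (card C) * ((real n + real t) / 2))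
              \<longrightarrow> (\<forall>k. clock (cfs k) > clock (cfs k0) + 3
                     \<longrightarrow> card C - d \<le> card {q \<in> C. delivered (cfs k) q (m, sn, i)})))
   \<comment> \<open>Message complexity: each broadcast sends n imp-messages\<close>
   \<and> (\<forall>(acts :: nat \<Rightarrow> 'm action) cfs k0 i m sn Ds k.
        execution False n t d C acts cfs \<and> i \<in> C \<and> acts k0 = Invoke i m sn Ds
        \<longrightarrow> n * (\<Sum>q \<in> C. length (filter (\<lambda>M. msg_key M = (sn, i)) (bclog (loc (cfs k) q))))
            \<le> 2 * n ^ 2)"
proof -
  have resil': "3 * t + 2 * d < n" using resil by simp
  have "card C \<le> n" using card_mono[OF finite_atLeastAtMost C_procs] by simp
  note two_step = two_step_delivery[OF _ C_procs at_most_t_byz resil' _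
      two_step_condition_forces_d_zero[OF \<open>card C \<le> n\<close>]]
  note three_step = three_step_delivery[OF _ C_procs at_most_t_byz _ three_step_condition]
  show ?thesis
    apply (intro conjI allI impI; elim conjE)
    subgoal by (rule delivered_invoked[OF _ C_procs])
    subgoal by (rule local_inv_dlog_unique[OF exec_inv_local[OF exec_inv_reachable[OF _ C_procs]]])
    subgoal by (rule delivered_agree[OF _ C_procs at_most_t_byz])
    subgoal by (rule local_delivery[OF _ _ C_procs at_most_t_byz resil'])
    subgoal by (rule global_delivery[OF _ _ C_procs at_most_t_byz])
    subgoal by (rule two_step)
    subgoal by (rule three_step)
    subgoal by (rule message_complexity[OF _ C_procs])
    done
qed

end
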